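(* Let $F$ be a field of characteristic zero and let $n,m$ be natural numbers, and let $r\le n$, $s\le m$ be natural numbers. Then each of the Lie algebras $W(n,m)$, $W(n,m,r,s)$ and $W^*(n,m)$ (defined in the context) is a simple Lie algebra.
   Context: Let $A_{n,m}$ be the commutative $F$-algebra with $F$-basis the symbols $e^{\alpha}x^{\beta}=e^{a_1x_1}\cdots e^{a_nx_n}x_1^{b_1}\cdots x_{n+m}^{b_{n+m}}$, $\alpha=(a_1,\dots,a_n)\in\mathbb Z^n$, $\beta=(b_1,\dots,b_{n+m})\in\mathbb Z^{n+m}$, with multiplication $e^{\alpha}x^{\beta}\cdot e^{\gamma}x^{\delta}=e^{\alpha+\gamma}x^{\beta+\delta}$. For $1\le i\le n+m$ let $\partial_i$ be the derivation of $A_{n,m}$ with $\partial_i(e^{\alpha}x^{\beta})=a_i e^{\alpha}x^{\beta}+b_i e^{\alpha}x^{\beta-\epsilon_i}$, where $a_i:=0$ for $i>n$ and $\epsilon_i$ is the $i$-th unit vector. $W(n,m)$ is the Lie algebra with basis $\{e^{\alpha}x^{\beta}\partial_i:\alpha\in\mathbb Z^n,\beta\in\mathbb Z^{n+m},1\le i\le n+m\}$ and bracket $[f\partial_i,g\partial_j]=f\,\partial_i(g)\,\partial_j-g\,\partial_j(f)\,\partial_i$ for $f,g\in A_{n,m}$. $W^*(n,m)$ is the subalgebra spanned by the basis elements $e^{\alpha}x^{\beta}\partial_i$ with $\beta\in\mathbb N^{n+m}$ ($\mathbb N$ the nonnegative integers). $W(n,m,r,s)$ is the subalgebra spanned by the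 basis elements $e^{\alpha}x^{\beta}\partial_k$ ($\alpha\in\mathbb Z^n$, $1\le k\le n+m$) such that $b_1,\dots,b_r\in\mathbb Z$, $b_{r+1},\dots,b_n\in\mathbb N$, $b_{n+1},\dots,b_{n+s}\in\mathbb Z$, $b_{n+s+1},\dots,b_{n+m}\in\mathbb N$. *)

theory Defs
  imports Main
begin

text \<open>Monomials e^alpha x^beta are encoded as pairs (alpha, beta) of functions
  nat => int; indices are 0-based: alpha i (i < n) is a_{i+1},
  beta i (i < n+m) is b_{i+1}.  Entries outside these ranges must be 0.\<close>

type_synonym mono = "(nat \<Rightarrow> int) \<times> (nat \<Rightarrow> int)"

text \<open>Elements of A_{n,m}: finitely supported coefficient functions mono => F.
  Elements of W(n,m): D :: nat => mono => F, where D k is the coefficient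
  (an element of A_{n,m}) of the derivation partial_{k+1}.\<close>

type_synonym 'F vf = "nat \<Rightarrow> mono \<Rightarrow> 'F"

definition valid_mono :: "nat \<Rightarrow> nat \<Rightarrow> mono \<Rightarrow> bool" where
  "valid_mono n m \<mu> \<longleftrightarrow> (\<forall>i\<ge>n. fst \<mu> i = 0) \<and> (\<forall>i\<ge>n+m. snd \<mu> i = 0)"

text \<open>Multiplication of A_{n,m} (bilinear extension of adding exponents).\<close>
definition amul :: "(mono \<Rightarrow> 'F::field) \<Rightarrow> (mono \<Rightarrow> 'F) \<Rightarrow> mono \<Rightarrow> 'F" where
  "amul f g \<mu> = (\<Sum>\<nu>\<in>{\<nu>. f \<nu> \<noteq> 0}.
      f \<nu> * g (\<lambda>i. fst \<mu> i - fst \<nu> i, \<lambda>i. snd \<mu> i - snd \<nu> i))"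

text \<open>The derivation partial_{i+1}: partial(e^a x^b) = a_i e^a x^b + b_i e^a x^(b - eps_i),
  with a_i = 0 for i >= n.\<close>
definition aderiv :: "nat \<Rightarrow> nat \<Rightarrow> (mono \<Rightarrow> 'F::field) \<Rightarrow> mono \<Rightarrow> 'F" where
  "aderiv n i f \<mu> =
     (if i < n then of_int (fst \<mu> i) else 0) * f \<mu>
     + of_int (snd \<mu> i + 1) * f (fst \<mu>, (snd \<mu>)(i := snd \<mu> i + 1))"

definition vf_zero :: "'F::field vf" where
  "vf_zero = (\<lambda>k \<mu>. 0)"

definition vf_add :: "'F::field vf \<Rightarrow> 'F vf \<Rightarrow> 'F vf" where
  "vf_add D E = (\<lambda>k \<mu>. D k \<mu> + E k \<mu>)"

definition vf_smul :: "'F::field \<Rightarrow> 'F vf \<Rightarrow> 'F vf" where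
  "vf_smul c D = (\<lambda>k \<mu>. c * D k \<mu>)"

text \<open>Bracket of W(n,m): bilinear extension of
  [f d_i, g d_j] = f d_i(g) d_j - g d_j(f) d_i, i.e.
  [sum_i f_i d_i, sum_j g_j d_j] = sum_k (sum_i f_i d_i(g_k) - g_i d_i(f_k)) d_k.\<close>
definition vf_bracket :: "nat \<Rightarrow> nat \<Rightarrow> 'F::field vf \<Rightarrow> 'F vf \<Rightarrow> 'F vf" where
  "vf_bracket n m D E = (\<lambda>k \<mu>. if k < n + m then
      (\<Sum>i<n+m. amul (D i) (aderiv n i (E k)) \<mu> - amul (E i) (aderiv n i (D k)) \<mu>)
    else 0)"

definition vf_space :: "nat \<Rightarrow> nat \<Rightarrow> (mono \<Rightarrow> bool) \<Rightarrow> 'F::field vf set" where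
  "vf_space n m P = {D. (\<forall>k\<ge>n+m. \<forall>\<mu>. D k \<mu> = 0) \<and>
      (\<forall>k<n+m. finite {\<mu>. D k \<mu> \<noteq> 0} \<and> (\<forall>\<mu>. D k \<mu> \<noteq> 0 \<longrightarrow> P \<mu>))}"

definition W :: "nat \<Rightarrow> nat \<Rightarrow> 'F::field vf set" where
  "W n m = vf_space n m (valid_mono n m)"

definition Wstar :: "nat \<Rightarrow> nat \<Rightarrow> 'F::field vf set" where
  "Wstar n m = vf_space n m (\<lambda>\<mu>. valid_mono n m \<mu> \<and> (\<forall>i. snd \<mu> i \<ge> 0))"

text \<open>W(n,m,r,s): b_1..b_r, b_{n+1}..b_{n+s} arbitrary; b_{r+1}..b_n and
  b_{n+s+1}..b_{n+m} nonnegative (0-based: indices r..n-1 and n+s..n+m-1).\<close>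
definition Wrs :: "nat \<Rightarrow> nat \<Rightarrow> nat \<Rightarrow> nat \<Rightarrow> 'F::field vf set" where
  "Wrs n m r s = vf_space n m (\<lambda>\<mu>. valid_mono n m \<mu> \<and>
      (\<forall>i. r \<le> i \<and> i < n \<longrightarrow> snd \<mu> i \<ge> 0) \<and>
      (\<forall>i. n + s \<le> i \<and> i < n + m \<longrightarrow> snd \<mu> i \<ge> 0))"

definition lie_algebra :: "'F::field vf set \<Rightarrow> ('F vf \<Rightarrow> 'F vf \<Rightarrow> 'F vf) \<Rightarrow> bool" where
  "lie_algebra L B \<longleftrightarrow>
     vf_zero \<in> L \<and>
     (\<forall>x\<in>L. \<forall>y\<in>L. vf_add x y \<in> L) \<and>
     (\<forall>c. \<forall>x\<in>L. vf_smul c x \<in> L) \<and>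
     (\<forall>x\<in>L. \<forall>y\<in>L. B x y \<in> L) \<and>
     (\<forall>x\<in>L. \<forall>y\<in>L. \<forall>z\<in>L. B (vf_add x y) z = vf_add (B x z) (B y z)
                        \<and> B z (vf_add x y) = vf_add (B z x) (B z y)) \<and>
     (\<forall>c. \<forall>x\<in>L. \<forall>y\<in>L. B (vf_smul c x) y = vf_smul c (B x y)
                      \<and> B x (vf_smul c y) = vf_smul c (B x y)) \<and>
     (\<forall>x\<in>L. B x x = vf_zero) \<and>
     (\<forall>x\<in>L. \<forall>y\<in>L. \<forall>z\<in>L.
        vf_add (B x (B y z)) (vf_add (B y (B z x)) (B z (B x y))) = vf_zero)"

definition lie_ideal :: "'F::field vf set \<Rightarrow> ('F vf \<Rightarrow> 'F vf \<Rightarrow> 'F vf) \<Rightarrow> 'F vf set \<Rightarrow> bool" where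
  "lie_ideal L B I \<longleftrightarrow> I \<subseteq> L \<and> vf_zero \<in> I \<and>
     (\<forall>x\<in>I. \<forall>y\<in>I. vf_add x y \<in> I) \<and> (\<forall>c. \<forall>x\<in>I. vf_smul c x \<in> I) \<and>
     (\<forall>x\<in>L. \<forall>y\<in>I. B x y \<in> I)"

definition simple_lie_algebra :: "'F::field vf set \<Rightarrow> ('F vf \<Rightarrow> 'F vf \<Rightarrow> 'F vf) \<Rightarrow> bool" where
  "simple_lie_algebra L B \<longleftrightarrow> lie_algebra L B \<and>
     (\<exists>x\<in>L. \<exists>y\<in>L. B x y \<noteq> vf_zero) \<and>
     (\<forall>I. lie_ideal L B I \<longrightarrow> I = {vf_zero} \<or> I = L)"

end

theory Submission
  imports Defs "HOL-Library.Poly_Mapping" "HOL-Library.Function_Algebras" "HOL-Library.Product_Plus"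
begin

text \<open>All three Lie algebras are the vector fields \<open>\<Sum> X\<^sub>i \<partial>\<^sub>i\<close> whose coefficients lie in
  the subalgebra \<open>A\<^sub>P\<close> spanned by a set \<open>P\<close> of admissible monomials.

  The key fact is that \<open>A\<^sub>P\<close> is \<open>\<partial>\<close>-simple: an ideal stable under every \<open>\<partial>\<^sub>j\<close> and containing
  some \<open>g \<noteq> 0\<close> contains \<open>1\<close>. After multiplying \<open>g\<close> by a monomial \<open>x\<^sup>\<beta>\<close> all its \<open>x\<close>-exponents
  are nonnegative; then \<open>\<partial>\<^sub>j - a\<^sub>j\<close> (with \<open>a\<^sub>j\<close> the \<open>e\<^sub>j\<close>-exponent of one of its monomials) keeps it
  nonzero but strictly shrinks a finite ``staircase'' of exponents, until a single \<open>e\<^sup>\<alpha>\<close>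
  is left, which is a unit.

  Now let \<open>I\<close> be a nonzero Lie ideal and \<open>M\<close> the largest \<open>A\<^sub>P\<close>-submodule contained in \<open>I\<close>.
  If \<open>M \<noteq> 0\<close>, the coefficients of its elements lie in \<open>K = {g. g W \<subseteq> I}\<close>, a \<open>\<partial>\<close>-stable ideal,
  so \<open>1 \<in> K\<close> and \<open>I = W\<close>. If \<open>M = 0\<close>, then the elements \<open>Y(c) X + X(c) Y\<close> of \<open>M\<close>, where
  \<open>X \<in> I\<close>, \<open>Y \<in> W\<close> and \<open>c = X(b)\<close>, vanish; taking \<open>Y = \<partial>\<^sub>i\<close> and \<open>b = x\<^sub>j, x\<^sub>j\<^sup>2\<close> this forces \<open>Z\<^sub>j\<^sup>2 = 0\<close>, hence by polarisation
  \<open>X\<^sub>j Z\<^sub>j = 0\<close>, for all \<open>X, Z \<in> I\<close>. The annihilator of the \<open>j\<close>-th coefficients of \<open>I\<close> is then a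
  \<open>\<partial>\<close>-stable ideal containing some \<open>X\<^sub>j \<noteq> 0\<close> but not \<open>1\<close>: a contradiction.\<close>

abbreviation lookup :: "('a \<Rightarrow>\<^sub>0 'b::zero) \<Rightarrow> 'a \<Rightarrow> 'b" where "lookup \<equiv> Poly_Mapping.lookup"
abbreviation single :: "'a \<Rightarrow> 'b \<Rightarrow> ('a \<Rightarrow>\<^sub>0 'b::zero)" where "single \<equiv> Poly_Mapping.single"
abbreviation keys :: "('a \<Rightarrow>\<^sub>0 'b::zero) \<Rightarrow> 'a set" where "keys \<equiv> Poly_Mapping.keys"

section \<open>The algebra of exponential polynomials\<close>

type_synonym 'F epoly = "mono \<Rightarrow>\<^sub>0 'F"

definition fin_supp :: "(mono \<Rightarrow> 'F::zero) \<Rightarrow> bool" where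
  "fin_supp f \<longleftrightarrow> finite {\<mu>. f \<mu> \<noteq> 0}"

definition epoly_of :: "(mono \<Rightarrow> 'F::zero) \<Rightarrow> 'F epoly" where
  "epoly_of f = Abs_poly_mapping f"

lemma lookup_epoly_of[simp]: "fin_supp f \<Longrightarrow> lookup (epoly_of f) = f"
  by (simp add: epoly_of_def fin_supp_def)

lemma epoly_of_lookup[simp]: "epoly_of (lookup p) = p"
  by (simp add: epoly_of_def lookup_inverse)

lemma fin_supp_lookup[simp]: "fin_supp (lookup p)"
  by (simp add: fin_supp_def)

lemma fin_supp_zero: "fin_supp (\<lambda>\<mu>. 0)"
  by (simp add: fin_supp_def)

lemma fin_supp_add: "fin_supp (f :: mono \<Rightarrow> 'F::monoid_add) \<Longrightarrow> fin_supp g \<Longrightarrow> fin_supp (\<lambda>\<mu>. f \<mu> + g \<mu>)"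
  unfolding fin_supp_def by (rule finite_subset[of _ "{\<mu>. f \<mu> \<noteq> 0} \<union> {\<mu>. g \<mu> \<noteq> 0}"]) auto

lemma fin_supp_smul: "fin_supp (f :: mono \<Rightarrow> 'F::field) \<Longrightarrow> fin_supp (\<lambda>\<mu>. c * f \<mu>)"
  unfolding fin_supp_def by (rule finite_subset[of _ "{\<mu>. f \<mu> \<noteq> 0}"]) auto

lemma epoly_of_zero: "epoly_of (\<lambda>\<mu>. 0) = 0"
  by (rule poly_mapping_eqI) (simp add: fin_supp_zero)

lemma keys_epoly_of: "fin_supp f \<Longrightarrow> keys (epoly_of f) = {\<mu>. f \<mu> \<noteq> 0}"
  by (simp add: in_keys_iff set_eq_iff)

lemma mono_diff: "((\<lambda>i. fst \<mu> i - fst \<nu> i, \<lambda>i. snd \<mu> i - snd \<nu> i) :: mono) = \<mu> - \<nu>"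
  by (simp add: prod_eq_iff fun_eq_iff)

lemma lookup_single_mult: "lookup (single k v * q) (\<mu> :: mono) = (v::'F::comm_ring_1) * lookup q (\<mu> - k)"
proof -
  have "lookup (single k v * q) \<mu> = (\<Sum>l. lookup (single k v) l * (\<Sum>q'. lookup q q' when \<mu> = l + q'))"
    by (rule lookup_mult)
  also have "\<dots> = (\<Sum>l. (v * (\<Sum>q'. lookup q q' when \<mu> = k + q')) when l = k)"
    by (rule Sum_any.cong) (auto simp: lookup_single when_def)
  also have "\<dots> = v * (\<Sum>q'. lookup q q' when \<mu> = k + q')" by simp
  also have "(\<Sum>q'. lookup q q' when \<mu> = k + q') = (\<Sum>q'. lookup q (\<mu> - k) when q' = \<mu> - k)"
    by (rule Sum_any.cong) (auto simp: when_def algebra_simps)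
  also have "\<dots> = lookup q (\<mu> - k)" by simp
  finally show ?thesis .
qed

lemma lookup_const_mult: "lookup (single 0 v * q) (\<mu> :: mono) = (v::'F::comm_ring_1) * lookup q \<mu>"
  by (simp add: lookup_single_mult)

lemma lookup_of_int_mult[simp]: "lookup (of_int c * q) (\<mu> :: mono) = (of_int c::'F::comm_ring_1) * lookup q \<mu>"
  by (metis lookup_const_mult single_of_int)

lemma amul_eq_lookup_mult:
  fixes f g :: "mono \<Rightarrow> 'F::field"
  assumes "fin_supp f" "fin_supp g"
  shows "amul f g = lookup (epoly_of f * epoly_of g)"
proof
  fix \<mu>
  have "lookup (epoly_of f * epoly_of g) \<mu> = (\<Sum>l. f l * (\<Sum>q'. g q' when \<mu> = l + q'))"
    using assms by (simp add: lookup_mult)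
  also have "\<dots> = (\<Sum>l. f l * g (\<mu> - l))"
  proof (rule Sum_any.cong)
    fix l
    have "(\<Sum>q'. g q' when \<mu> = l + q') = (\<Sum>q'. g (\<mu> - l) when q' = \<mu> - l)"
      by (rule Sum_any.cong) (auto simp: when_def algebra_simps)
    then show "f l * (\<Sum>q'. g q' when \<mu> = l + q') = f l * g (\<mu> - l)" by simp
  qed
  also have "\<dots> = (\<Sum>l\<in>{l. f l \<noteq> 0}. f l * g (\<mu> - l))"
    using assms(1) unfolding fin_supp_def by (intro Sum_any.expand_superset) auto
  also have "\<dots> = amul f g \<mu>"
    by (simp add: amul_def mono_diff)
  finally show "amul f g \<mu> = lookup (epoly_of f * epoly_of g) \<mu>" ..
qed

lemma of_nat_mult_eq_zero:
  assumes "(of_nat k :: 'F::field_char_0 epoly) * p = 0" "k \<noteq> 0"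
  shows "p = 0"
proof (rule poly_mapping_eqI)
  fix \<mu>
  have "lookup ((of_nat k :: 'F epoly) * p) \<mu> = of_nat k * lookup p \<mu>"
    by (metis lookup_of_int_mult of_int_of_nat_eq)
  then show "lookup p \<mu> = lookup 0 \<mu>" using assms by simp
qed

section \<open>The derivations \<open>\<partial>\<^sub>i\<close>\<close>

definition exp_coeff :: "nat \<Rightarrow> nat \<Rightarrow> mono \<Rightarrow> int" where
  "exp_coeff n i \<mu> = (if i < n then fst \<mu> i else 0)"

definition raise :: "nat \<Rightarrow> mono \<Rightarrow> mono" where
  "raise i \<mu> = (fst \<mu>, (snd \<mu>)(i := snd \<mu> i + 1))"

definition lower :: "nat \<Rightarrow> mono \<Rightarrow> mono" where
  "lower i \<mu> = (fst \<mu>, (snd \<mu>)(i := snd \<mu> i - 1))"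

lemma aderiv_eq: "aderiv n i f \<mu> = of_int (exp_coeff n i \<mu>) * f \<mu> + of_int (snd \<mu> i + 1) * f (raise i \<mu>)"
  by (simp add: aderiv_def exp_coeff_def raise_def)

lemma lower_raise[simp]: "lower i (raise i \<mu>) = \<mu>"
  and raise_lower[simp]: "raise i (lower i \<mu>) = \<mu>"
  by (auto simp: lower_def raise_def)

lemma exp_coeff_diff: "exp_coeff n i (\<mu> - \<nu>) = exp_coeff n i \<mu> - exp_coeff n i \<nu>"
  by (simp add: exp_coeff_def)

lemma exp_coeff_raise[simp]: "exp_coeff n j (raise i \<mu>) = exp_coeff n j \<mu>"
  and exp_coeff_lower[simp]: "exp_coeff n j (lower i \<mu>) = exp_coeff n j \<mu>"
  by (simp_all add: exp_coeff_def raise_def lower_def)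

lemma snd_raise: "snd (raise i \<mu>) j = (if j = i then snd \<mu> j + 1 else snd \<mu> j)"
  by (simp add: raise_def)

lemma snd_lower: "snd (lower i \<mu>) j = (if j = i then snd \<mu> j - 1 else snd \<mu> j)"
  by (simp add: lower_def)

lemma fst_raise[simp]: "fst (raise i \<mu>) = fst \<mu>"
  and fst_lower[simp]: "fst (lower i \<mu>) = fst \<mu>"
  by (simp_all add: raise_def lower_def)

lemma raise_diff: "raise i \<mu> - k = raise i (\<mu> - k)"
  by (simp add: raise_def prod_eq_iff fun_eq_iff)

lemma diff_lower: "\<mu> - lower i k = raise i (\<mu> - k)"
  by (simp add: raise_def lower_def prod_eq_iff fun_eq_iff)

lemma raise_commute: "raise i (raise j \<mu>) = raise j (raise i \<mu>)"
  by (simp add: raise_def prod_eq_iff fun_eq_iff)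

lemma fin_supp_aderiv:
  assumes "fin_supp f"
  shows "fin_supp (aderiv n i f)"
proof -
  have "{\<mu>. aderiv n i f \<mu> \<noteq> 0} \<subseteq> {\<mu>. f \<mu> \<noteq> 0} \<union> lower i ` {\<mu>. f \<mu> \<noteq> 0}"
  proof
    fix \<mu> assume "\<mu> \<in> {\<mu>. aderiv n i f \<mu> \<noteq> 0}"
    then have "f \<mu> \<noteq> 0 \<or> f (raise i \<mu>) \<noteq> 0" by (auto simp: aderiv_eq)
    then show "\<mu> \<in> {\<mu>. f \<mu> \<noteq> 0} \<union> lower i ` {\<mu>. f \<mu> \<noteq> 0}"
      by (metis (mono_tags, lifting) UnI1 UnI2 image_eqI lower_raise mem_Collect_eq)
  qed
  then show ?thesis using assms unfolding fin_supp_def by (meson finite_Un finite_imageI finite_subset)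
qed

definition partial :: "nat \<Rightarrow> nat \<Rightarrow> 'F::field epoly \<Rightarrow> 'F epoly" where
  "partial n i p = epoly_of (aderiv n i (lookup p))"

lemma lookup_partial:
  "lookup (partial n i p) \<mu> = of_int (exp_coeff n i \<mu>) * lookup p \<mu> + of_int (snd \<mu> i + 1) * lookup p (raise i \<mu>)"
  by (simp add: partial_def fin_supp_aderiv aderiv_eq)

lemma partial_epoly_of: "fin_supp f \<Longrightarrow> partial n i (epoly_of f) = epoly_of (aderiv n i f)"
  by (simp add: partial_def)

lemma partial_add: "partial n i (p + q) = partial n i p + partial n i q"
  by (rule poly_mapping_eqI) (simp add: lookup_partial lookup_add algebra_simps)

lemma partial_diff: "partial n i (p - q) = partial n i p - partial n i q"
  by (rule poly_mapping_eqI) (simp add: lookup_partial lookup_minus algebra_simps)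

lemma partial_zero[simp]: "partial n i 0 = 0"
  by (rule poly_mapping_eqI) (simp add: lookup_partial)

lemma partial_sum: "partial n i (\<Sum>j\<in>A. f j) = (\<Sum>j\<in>A. partial n i (f j))"
  by (induction A rule: infinite_finite_induct) (simp_all add: partial_add)

lemma partial_single:
  "partial n i (single k v) = single k (of_int (exp_coeff n i k) * v) + single (lower i k) (of_int (snd k i) * v)"
proof (rule poly_mapping_eqI)
  fix \<mu>
  show "lookup (partial n i (single k v)) \<mu>
      = lookup (single k (of_int (exp_coeff n i k) * v) + single (lower i k) (of_int (snd k i) * v)) \<mu>"
  proof (cases "raise i \<mu> = k")
    case True
    then have "\<mu> = lower i k" by auto
    moreover have "snd (lower i k) i \<noteq> snd k i" by (simp add: snd_lower)
    then have "lower i k \<noteq> k" by auto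
    ultimately show ?thesis using True by (simp add: lookup_partial lookup_add lookup_single snd_lower)
  next
    case False
    then have "\<mu> \<noteq> lower i k" by auto
    then show ?thesis using False by (auto simp: lookup_partial lookup_add lookup_single when_def)
  qed
qed

lemma partial_const[simp]: "partial n i (single 0 c) = 0"
  by (simp add: partial_single exp_coeff_def)

lemma partial_one[simp]: "partial n i 1 = 0"
  by (metis partial_const single_one)

lemma partial_single_mult:
  "partial n i (single k v * q) = partial n i (single k v) * q + single k v * partial n i (q :: 'F::field epoly)"
proof (rule poly_mapping_eqI)
  fix \<mu>
  show "lookup (partial n i (single k v * q)) \<mu> = lookup (partial n i (single k v) * q + single k v * partial n i q) \<mu>"
    unfolding partial_single distrib_right lookup_add lookup_single_mult lookup_partial
    by (simp add: raise_diff diff_lower exp_coeff_diff algebra_simps)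
qed

lemma update_eq_add_single: "k \<notin> keys p \<Longrightarrow> Poly_Mapping.update k v p = p + single k v"
  by (rule poly_mapping_eqI) (auto simp: lookup_update lookup_add lookup_single in_keys_iff when_def)

lemma partial_mult: "partial n i (p * q) = partial n i p * q + p * partial n i (q :: 'F::field epoly)"
proof (induction p rule: update_induct)
  case const
  then show ?case by simp
next
  case (update f a b)
  have "partial n i ((f + single a b) * q) = partial n i (f * q) + partial n i (single a b * q)"
    by (simp add: distrib_right partial_add)
  also have "\<dots> = (partial n i f * q + f * partial n i q) + (partial n i (single a b) * q + single a b * partial n i q)"
    using update.IH partial_single_mult by metis
  finally show ?case
    by (simp add: update_eq_add_single[OF update.hyps(1)] partial_add algebra_simps)
qed

lemma partial_commute: "partial n i (partial n j p) = partial n j (partial n i p)"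
  by (rule poly_mapping_eqI) (simp add: lookup_partial snd_raise raise_commute algebra_simps)

section \<open>Vector fields\<close>

text \<open>A vector field \<open>\<Sum>\<^bsub>i<N\<^esub> X\<^sub>i \<partial>\<^sub>i\<close> is represented by its coefficient sequence \<open>X\<close>.\<close>

definition vapply :: "nat \<Rightarrow> nat \<Rightarrow> (nat \<Rightarrow> 'F::field epoly) \<Rightarrow> 'F epoly \<Rightarrow> 'F epoly" where
  "vapply N n X g = (\<Sum>i<N. X i * partial n i g)"

definition vbr :: "nat \<Rightarrow> nat \<Rightarrow> (nat \<Rightarrow> 'F::field epoly) \<Rightarrow> (nat \<Rightarrow> 'F epoly) \<Rightarrow> nat \<Rightarrow> 'F epoly" where
  "vbr N n X Y = (\<lambda>k. if k < N then vapply N n X (Y k) - vapply N n Y (X k) else 0)"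

definition vscale :: "'F::field epoly \<Rightarrow> (nat \<Rightarrow> 'F epoly) \<Rightarrow> nat \<Rightarrow> 'F epoly" where
  "vscale a X = (\<lambda>k. a * X k)"

definition partial_field :: "nat \<Rightarrow> nat \<Rightarrow> 'F::field epoly" where
  "partial_field i = (\<lambda>k. if k = i then 1 else 0)"

definition coord_mono :: "nat \<Rightarrow> mono" where
  "coord_mono j = (0, (\<lambda>t. if t = j then 1 else 0))"

definition coord :: "nat \<Rightarrow> 'F::field epoly" where
  "coord j = single (coord_mono j) 1"

lemma vscale_apply[simp]: "vscale a X k = a * X k"
  by (simp add: vscale_def)

lemma vscale_eta: "(\<lambda>k. a * X k) = vscale a X"
  by (simp add: vscale_def)

lemma vapply_add_right: "vapply N n X (g + h) = vapply N n X g + vapply N n X h"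
  by (simp add: vapply_def partial_add distrib_left sum.distrib)

lemma vapply_diff_right: "vapply N n X (g - h) = vapply N n X g - vapply N n X h"
  by (simp add: vapply_def partial_diff right_diff_distrib sum_subtractf)

lemma vapply_add_left: "vapply N n (\<lambda>k. X k + Y k) g = vapply N n X g + vapply N n Y g"
  by (simp add: vapply_def distrib_right sum.distrib)

lemma vapply_vscale: "vapply N n (vscale a X) g = a * vapply N n X g"
  by (simp add: vapply_def vscale_def sum_distrib_left mult.assoc)

lemma vapply_mult: "vapply N n X (g * h) = vapply N n X g * h + g * vapply N n X h"
  by (simp add: vapply_def partial_mult distrib_left sum.distrib sum_distrib_left sum_distrib_right algebra_simps)

lemma vapply_const[simp]: "vapply N n X (single 0 c) = 0"
  by (simp add: vapply_def)

lemma vapply_partial_field: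
  assumes "i < N"
  shows "vapply N n (partial_field i) g = partial n i g"
proof -
  have "vapply N n (partial_field i) g = (\<Sum>k<N. if k = i then partial n k g else 0)"
    unfolding vapply_def partial_field_def by (rule sum.cong) auto
  then show ?thesis using assms by (simp add: sum.delta)
qed

lemma partial_coord: "partial n i (coord j) = (if i = j then 1 else 0)"
proof -
  have "exp_coeff n i (coord_mono j) = 0" by (simp add: exp_coeff_def coord_mono_def)
  moreover have "lower j (coord_mono j) = 0" by (simp add: lower_def coord_mono_def prod_eq_iff fun_eq_iff)
  ultimately show ?thesis
    by (simp add: coord_def partial_single coord_mono_def single_one)
qed

lemma vapply_coord:
  assumes "j < N"
  shows "vapply N n X (coord j) = X j"
proof -
  have "vapply N n X (coord j) = (\<Sum>k<N. if k = j then X k else 0)"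
    unfolding vapply_def partial_coord by (rule sum.cong) auto
  then show ?thesis using assms by (simp add: sum.delta)
qed

lemma vapply_vapply:
  "vapply N n X (vapply N n Y g)
     = (\<Sum>i<N. vapply N n X (Y i) * partial n i g) + (\<Sum>i<N. \<Sum>j<N. X j * Y i * partial n j (partial n i g))"
proof -
  have "vapply N n X (vapply N n Y g)
      = (\<Sum>j<N. X j * (\<Sum>i<N. partial n j (Y i) * partial n i g + Y i * partial n j (partial n i g)))"
    by (simp add: vapply_def[of N n Y] vapply_def[of N n X] partial_sum partial_mult)
  also have "\<dots> = (\<Sum>j<N. \<Sum>i<N. X j * partial n j (Y i) * partial n i g)
      + (\<Sum>j<N. \<Sum>i<N. X j * Y i * partial n j (partial n i g))"
    by (simp add: sum_distrib_left sum.distrib distrib_left mult.assoc)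
  also have "(\<Sum>j<N. \<Sum>i<N. X j * partial n j (Y i) * partial n i g) = (\<Sum>i<N. vapply N n X (Y i) * partial n i g)"
    by (subst sum.swap) (simp add: vapply_def sum_distrib_right)
  also have "(\<Sum>j<N. \<Sum>i<N. X j * Y i * partial n j (partial n i g))
      = (\<Sum>i<N. \<Sum>j<N. X j * Y i * partial n j (partial n i g))"
    by (rule sum.swap)
  finally show ?thesis .
qed

lemma vapply_vbr: "vapply N n (vbr N n X Y) g = vapply N n X (vapply N n Y g) - vapply N n Y (vapply N n X g)"
proof -
  have second_order: "(\<Sum>i<N. \<Sum>j<N. X j * Y i * partial n j (partial n i g))
      = (\<Sum>i<N. \<Sum>j<N. Y j * X i * partial n j (partial n i g))"
    by (subst sum.swap) (simp add: partial_commute mult.commute)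
  have "vapply N n (vbr N n X Y) g
      = (\<Sum>i<N. vapply N n X (Y i) * partial n i g) - (\<Sum>i<N. vapply N n Y (X i) * partial n i g)"
    by (simp add: vapply_def vbr_def left_diff_distrib sum_subtractf)
  then show ?thesis unfolding vapply_vapply second_order by simp
qed

lemma vbr_less: "k < N \<Longrightarrow> vbr N n X Y k = vapply N n X (Y k) - vapply N n Y (X k)"
  by (simp add: vbr_def)

lemma vbr_jacobi: "vbr N n X (vbr N n Y Z) k + vbr N n Y (vbr N n Z X) k + vbr N n Z (vbr N n X Y) k = 0"
  by (cases "k < N") (simp_all add: vbr_less vapply_vbr vapply_diff_right, simp add: vbr_def)

lemma vbr_self: "vbr N n X X = (\<lambda>k. 0)"
  by (simp add: vbr_def fun_eq_iff)

lemma vbr_add_left: "vbr N n (\<lambda>k. X k + Y k) Z = (\<lambda>k. vbr N n X Z k + vbr N n Y Z k)"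
  by (simp add: vbr_def fun_eq_iff vapply_add_left vapply_add_right)

lemma vbr_add_right: "vbr N n Z (\<lambda>k. X k + Y k) = (\<lambda>k. vbr N n Z X k + vbr N n Z Y k)"
  by (simp add: vbr_def fun_eq_iff vapply_add_left vapply_add_right)

lemma vbr_vscale_left:
  assumes "\<And>k. N \<le> k \<Longrightarrow> Y k = 0"
  shows "vbr N n (vscale a Y) Z = (\<lambda>k. a * vbr N n Y Z k - vapply N n Z a * Y k)"
  using assms by (auto simp: fun_eq_iff vbr_def vapply_vscale vapply_mult algebra_simps)

lemma vbr_vscale_right:
  assumes "\<And>k. N \<le> k \<Longrightarrow> Z k = 0"
  shows "vbr N n Y (vscale a Z) = (\<lambda>k. a * vbr N n Y Z k + vapply N n Y a * Z k)"
  using assms by (auto simp: fun_eq_iff vbr_def vapply_vscale vapply_mult algebra_simps)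

lemma vbr_partial_field_left:
  assumes "l < N" "k < N"
  shows "vbr N n (partial_field l) Z k = partial n l (Z k)"
proof -
  have "vapply N n Z (partial_field l k) = 0"
    by (simp add: partial_field_def vapply_def)
  then show ?thesis using assms by (simp add: vbr_def vapply_partial_field)
qed

definition fin_fields :: "'F::field vf \<Rightarrow> bool" where
  "fin_fields D \<longleftrightarrow> (\<forall>k. fin_supp (D k))"

definition to_epolys :: "'F::field vf \<Rightarrow> nat \<Rightarrow> 'F epoly" where
  "to_epolys D = (\<lambda>k. epoly_of (D k))"

definition of_epolys :: "(nat \<Rightarrow> 'F::field epoly) \<Rightarrow> 'F vf" where
  "of_epolys X = (\<lambda>k. lookup (X k))"

lemma to_epolys_of_epolys[simp]: "to_epolys (of_epolys X) = X"
  by (simp add: to_epolys_def of_epolys_def)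

lemma of_epolys_to_epolys: "fin_fields D \<Longrightarrow> of_epolys (to_epolys D) = D"
  by (simp add: to_epolys_def of_epolys_def fin_fields_def fun_eq_iff)

lemma fin_fields_of_epolys: "fin_fields (of_epolys X)"
  by (simp add: fin_fields_def of_epolys_def)

lemma to_epolys_inject: "fin_fields D \<Longrightarrow> fin_fields E \<Longrightarrow> to_epolys D = to_epolys E \<Longrightarrow> D = E"
  by (metis of_epolys_to_epolys)

lemma to_epolys_vf_add:
  "fin_fields D \<Longrightarrow> fin_fields E \<Longrightarrow> to_epolys (vf_add D E) = (\<lambda>k. to_epolys D k + to_epolys E k)"
  unfolding fin_fields_def to_epolys_def vf_add_def
  by (intro ext poly_mapping_eqI) (simp add: lookup_add fin_supp_add)

lemma fin_fields_vf_add: "fin_fields D \<Longrightarrow> fin_fields E \<Longrightarrow> fin_fields (vf_add D E)"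
  by (simp add: fin_fields_def vf_add_def fin_supp_add)

lemma to_epolys_vf_smul: "fin_fields D \<Longrightarrow> to_epolys (vf_smul c D) = vscale (single 0 c) (to_epolys D)"
  unfolding fin_fields_def to_epolys_def vf_smul_def vscale_def
  by (intro ext poly_mapping_eqI) (simp add: lookup_const_mult fin_supp_smul)

lemma fin_fields_vf_smul: "fin_fields D \<Longrightarrow> fin_fields (vf_smul c D)"
  by (simp add: fin_fields_def vf_smul_def fin_supp_smul)

lemma to_epolys_vf_zero: "to_epolys vf_zero = (\<lambda>k. 0)"
  unfolding to_epolys_def vf_zero_def
  by (intro ext poly_mapping_eqI) (simp add: fin_supp_zero)

lemma fin_fields_vf_zero: "fin_fields vf_zero"
  by (simp add: fin_fields_def vf_zero_def fin_supp_zero)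

lemma vf_bracket_eq:
  assumes "fin_fields D" "fin_fields E"
  shows "vf_bracket n m D E = of_epolys (vbr (n + m) n (to_epolys D) (to_epolys E))"
proof (intro ext)
  fix k \<mu>
  show "vf_bracket n m D E k \<mu> = of_epolys (vbr (n + m) n (to_epolys D) (to_epolys E)) k \<mu>"
  proof (cases "k < n + m")
    case True
    have fD: "fin_supp (D i)" "fin_supp (E i)" for i using assms by (auto simp: fin_fields_def)
    have a: "amul (D i) (aderiv n i (E k)) \<mu> = lookup (epoly_of (D i) * partial n i (epoly_of (E k))) \<mu>" for i
      by (simp add: amul_eq_lookup_mult fD fin_supp_aderiv partial_epoly_of)
    have b: "amul (E i) (aderiv n i (D k)) \<mu> = lookup (epoly_of (E i) * partial n i (epoly_of (D k))) \<mu>" for i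
      by (simp add: amul_eq_lookup_mult fD fin_supp_aderiv partial_epoly_of)
    show ?thesis using True
      by (simp add: vf_bracket_def of_epolys_def vbr_def vapply_def to_epolys_def lookup_minus lookup_sum a b sum_subtractf)
  next
    case False
    then show ?thesis by (simp add: vf_bracket_def of_epolys_def vbr_def)
  qed
qed

lemma fin_fields_vf_bracket: "fin_fields D \<Longrightarrow> fin_fields E \<Longrightarrow> fin_fields (vf_bracket n m D E)"
  by (simp add: vf_bracket_eq fin_fields_of_epolys)

lemma to_epolys_vf_bracket:
  "fin_fields D \<Longrightarrow> fin_fields E \<Longrightarrow> to_epolys (vf_bracket n m D E) = vbr (n + m) n (to_epolys D) (to_epolys E)"
  by (simp add: vf_bracket_eq)

section \<open>Admissible monomials\<close>

locale adm_monos =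
  fixes n N :: nat and P :: "mono \<Rightarrow> bool"
  assumes n_le_N: "n \<le> N"
    and P_fst: "P \<mu> \<Longrightarrow> n \<le> i \<Longrightarrow> fst \<mu> i = 0"
    and P_snd: "P \<mu> \<Longrightarrow> N \<le> i \<Longrightarrow> snd \<mu> i = 0"
    and P_zero: "P 0"
    and P_add: "P \<mu> \<Longrightarrow> P \<nu> \<Longrightarrow> P (\<mu> + \<nu>)"
    and P_lower: "P \<mu> \<Longrightarrow> snd \<mu> i \<noteq> 0 \<Longrightarrow> P (lower i \<mu>)"
    and P_exp: "(\<forall>i\<ge>n. \<alpha> i = 0) \<Longrightarrow> P (\<alpha>, 0)"
    and P_poly: "(\<forall>i. 0 \<le> \<beta> i) \<Longrightarrow> (\<forall>i\<ge>N. \<beta> i = 0) \<Longrightarrow> P (0, \<beta>)"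
begin

definition Alg :: "'F::field_char_0 epoly set" where
  "Alg = {p. \<forall>\<mu>\<in>keys p. P \<mu>}"

lemma Alg_zero[simp]: "0 \<in> Alg"
  by (simp add: Alg_def)

lemma Alg_add: assumes "p \<in> Alg" "q \<in> Alg" shows "p + q \<in> Alg"
  unfolding Alg_def
proof (intro CollectI ballI)
  fix \<mu> assume "\<mu> \<in> keys (p + q)"
  then have "\<mu> \<in> keys p \<union> keys q" by (rule subsetD[OF keys_add])
  then show "P \<mu>" using assms unfolding Alg_def by blast
qed

lemma Alg_uminus: "p \<in> Alg \<Longrightarrow> - p \<in> Alg"
  by (simp only: Alg_def mem_Collect_eq keys_minus)

lemma Alg_diff: assumes "p \<in> Alg" "q \<in> Alg" shows "p - q \<in> Alg"
  using Alg_add[OF assms(1) Alg_uminus[OF assms(2)]] by simp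

lemma Alg_mult: assumes "p \<in> Alg" "q \<in> Alg" shows "p * q \<in> Alg"
  unfolding Alg_def
proof (intro CollectI ballI)
  fix \<mu> assume "\<mu> \<in> keys (p * q)"
  then have "\<mu> \<in> {a + b |a b. a \<in> keys p \<and> b \<in> keys q}"
    using keys_mult by blast
  then obtain a b where "\<mu> = a + b" "a \<in> keys p" "b \<in> keys q" by blast
  then show "P \<mu>" using assms P_add unfolding Alg_def by blast
qed

lemma Alg_sum: "(\<And>i. i \<in> A \<Longrightarrow> f i \<in> Alg) \<Longrightarrow> sum f A \<in> Alg"
  by (induction A rule: infinite_finite_induct) (auto intro: Alg_add)

lemma Alg_single: "P \<mu> \<Longrightarrow> single \<mu> v \<in> Alg"
  unfolding Alg_def using keys_single[of \<mu> v] by (cases "v = 0") auto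

lemma Alg_const: "single 0 v \<in> Alg"
  by (rule Alg_single[OF P_zero])

lemma Alg_one[simp]: "1 \<in> Alg"
  using Alg_const[of 1] by simp

lemma Alg_partial: assumes "p \<in> Alg" shows "partial n i p \<in> Alg"
  unfolding Alg_def
proof (intro CollectI ballI)
  have p: "\<forall>\<mu>\<in>keys p. P \<mu>" using assms by (simp add: Alg_def)
  fix \<nu> assume "\<nu> \<in> keys (partial n i p)"
  then have "lookup (partial n i p) \<nu> \<noteq> 0" by (simp add: in_keys_iff)
  then have "lookup p \<nu> \<noteq> 0 \<or> (lookup p (raise i \<nu>) \<noteq> 0 \<and> snd \<nu> i + 1 \<noteq> 0)"
    by (cases "snd \<nu> i + 1 = 0") (auto simp: lookup_partial)
  then show "P \<nu>"
  proof
    assume "lookup p \<nu> \<noteq> 0" then show ?thesis using p by (simp add: in_keys_iff)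
  next
    assume a: "lookup p (raise i \<nu>) \<noteq> 0 \<and> snd \<nu> i + 1 \<noteq> 0"
    then have "P (raise i \<nu>)" using p by (simp add: in_keys_iff)
    moreover have "snd (raise i \<nu>) i \<noteq> 0" using a by (simp add: snd_raise)
    ultimately show ?thesis using P_lower by fastforce
  qed
qed

lemma Alg_coord: "j < N \<Longrightarrow> coord j \<in> Alg"
  unfolding coord_def coord_mono_def by (rule Alg_single, rule P_poly) auto


definition Vf :: "(nat \<Rightarrow> 'F::field_char_0 epoly) set" where
  "Vf = {X. (\<forall>k\<ge>N. X k = 0) \<and> (\<forall>k<N. X k \<in> Alg)}"

lemma VfI: "(\<And>k. k \<ge> N \<Longrightarrow> X k = 0) \<Longrightarrow> (\<And>k. k < N \<Longrightarrow> X k \<in> Alg) \<Longrightarrow> X \<in> Vf"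
  unfolding Vf_def by blast

lemma Vf_high_zero: "X \<in> Vf \<Longrightarrow> N \<le> k \<Longrightarrow> X k = 0"
  unfolding Vf_def by blast

lemma Vf_coeff: "X \<in> Vf \<Longrightarrow> k < N \<Longrightarrow> X k \<in> Alg"
  unfolding Vf_def by blast

lemma Alg_vapply: "X \<in> Vf \<Longrightarrow> g \<in> Alg \<Longrightarrow> vapply N n X g \<in> Alg"
  unfolding vapply_def by (intro Alg_sum Alg_mult Alg_partial) (auto simp: Vf_coeff)

lemma Vf_zero: "(\<lambda>k. 0) \<in> Vf"
  by (rule VfI) auto

lemma Vf_add: "X \<in> Vf \<Longrightarrow> Y \<in> Vf \<Longrightarrow> (\<lambda>k. X k + Y k) \<in> Vf"
  by (rule VfI) (simp_all add: Vf_high_zero Alg_add Vf_coeff)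

lemma Vf_vscale: "a \<in> Alg \<Longrightarrow> X \<in> Vf \<Longrightarrow> vscale a X \<in> Vf"
  by (rule VfI) (simp_all add: Vf_high_zero Alg_mult Vf_coeff)

lemma Vf_vbr: assumes "X \<in> Vf" "Y \<in> Vf" shows "vbr N n X Y \<in> Vf"
proof (rule VfI)
  fix k assume "N \<le> k" then show "vbr N n X Y k = 0" by (simp add: vbr_def)
next
  fix k assume k: "k < N"
  have "vapply N n X (Y k) \<in> Alg" by (rule Alg_vapply[OF assms(1) Vf_coeff[OF assms(2) k]])
  moreover have "vapply N n Y (X k) \<in> Alg" by (rule Alg_vapply[OF assms(2) Vf_coeff[OF assms(1) k]])
  ultimately show "vbr N n X Y k \<in> Alg" using k by (simp add: vbr_less Alg_diff)
qed

lemma Vf_partial_field: "i < N \<Longrightarrow> partial_field i \<in> Vf"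
  by (rule VfI) (auto simp: partial_field_def)

lemma vf_space_imp_Vf:
  assumes "D \<in> vf_space n (N - n) P"
  shows "fin_fields D \<and> to_epolys D \<in> Vf"
proof -
  have N_eq: "n + (N - n) = N" using n_le_N by simp
  have D1: "\<forall>k\<ge>N. \<forall>\<mu>. D k \<mu> = 0" and D2: "\<forall>k<N. finite {\<mu>. D k \<mu> \<noteq> 0} \<and> (\<forall>\<mu>. D k \<mu> \<noteq> 0 \<longrightarrow> P \<mu>)"
    using assms unfolding vf_space_def N_eq mem_Collect_eq by blast+
  have z: "D k = (\<lambda>\<mu>. 0)" if "N \<le> k" for k using D1 that by blast
  have f: "fin_supp (D k)" for k
    using D2 z[of k] fin_supp_zero by (cases "k < N") (simp_all add: fin_supp_def)
  have "to_epolys D \<in> Vf"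
  proof (rule VfI)
    fix k assume "N \<le> k" then show "to_epolys D k = 0"
      using z[of k] by (simp add: to_epolys_def epoly_of_zero)
  next
    fix k assume k: "k < N"
    have "\<forall>\<mu>. D k \<mu> \<noteq> 0 \<longrightarrow> P \<mu>" using D2 k by blast
    then show "to_epolys D k \<in> Alg" unfolding Alg_def to_epolys_def mem_Collect_eq keys_epoly_of[OF f] by blast
  qed
  then show ?thesis using f by (simp add: fin_fields_def)
qed

lemma vf_spaceI:
  assumes "fin_fields D" "to_epolys D \<in> Vf"
  shows "D \<in> vf_space n (N - n) P"
proof -
  have N_eq: "n + (N - n) = N" using n_le_N by simp
  have f: "fin_supp (D k)" for k using assms(1) by (simp add: fin_fields_def)
  show ?thesis unfolding vf_space_def N_eq
  proof (intro CollectI conjI allI impI)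
    fix k \<mu> assume "N \<le> k"
    then have "lookup (to_epolys D k) \<mu> = 0" using Vf_high_zero[OF assms(2)] by simp
    then show "D k \<mu> = 0" using f[of k] by (simp add: to_epolys_def)
  next
    fix k assume "k < N"
    then show "finite {\<mu>. D k \<mu> \<noteq> 0}" using f[of k] by (simp add: fin_supp_def)
  next
    fix k \<mu> assume k: "k < N" and "D k \<mu> \<noteq> 0"
    then have "\<mu> \<in> keys (to_epolys D k)" using f[of k] by (simp add: to_epolys_def keys_epoly_of)
    moreover have "to_epolys D k \<in> Alg" using Vf_coeff[OF assms(2) k] .
    ultimately show "P \<mu>" unfolding Alg_def by blast
  qed
qed

lemma vf_space_iff: "D \<in> vf_space n (N - n) P \<longleftrightarrow> fin_fields D \<and> to_epolys D \<in> Vf"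
  using vf_space_imp_Vf vf_spaceI by blast

lemma to_epolys_bracket:
  "fin_fields D \<Longrightarrow> fin_fields E \<Longrightarrow> to_epolys (vf_bracket n (N - n) D E) = vbr N n (to_epolys D) (to_epolys E)"
  using to_epolys_vf_bracket[of D E n "N - n"] n_le_N by simp

end

section \<open>Shifted derivations and the staircase measure\<close>

definition partial_shift :: "nat \<Rightarrow> nat \<Rightarrow> int \<Rightarrow> 'F::field epoly \<Rightarrow> 'F epoly" where
  "partial_shift n j c p = partial n j p - of_int c * p"

text \<open>The staircase of \<open>p\<close> in direction \<open>j\<close> is the set of all \<open>(a\<^sub>j, b)\<close> with \<open>0 \<le> b \<le> b\<^sub>j\<close> for some
  monomial \<open>e\<^sup>a x\<^sup>b\<close> of \<open>p\<close>; it is finite, and \<open>\<partial>\<^sub>j - a\<^sub>j\<close> removes the top step of column \<open>a\<^sub>j\<close>.\<close>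

definition staircase :: "nat \<Rightarrow> nat \<Rightarrow> 'F::field epoly \<Rightarrow> (int \<times> int) set" where
  "staircase n j p = (\<Union>\<mu>\<in>keys p. {exp_coeff n j \<mu>} \<times> {0..snd \<mu> j})"

definition staircase_size :: "nat \<Rightarrow> nat \<Rightarrow> 'F::field epoly \<Rightarrow> nat" where
  "staircase_size n N p = (\<Sum>j<N. card (staircase n j p))"

definition nonneg :: "'F::field epoly \<Rightarrow> bool" where
  "nonneg p \<longleftrightarrow> (\<forall>\<mu>\<in>keys p. \<forall>i. 0 \<le> snd \<mu> i)"

lemma obtain_max_on_finite:
  fixes f :: "'a \<Rightarrow> 'b::linorder"
  assumes "finite S" "S \<noteq> {}"
  obtains x where "x \<in> S" "\<And>y. y \<in> S \<Longrightarrow> f y \<le> f x"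
proof -
  have "Max (f ` S) \<in> f ` S" using assms by (intro Max_in) auto
  then obtain x where x: "x \<in> S" "f x = Max (f ` S)" by auto
  show ?thesis
  proof (rule that[OF x(1)])
    fix y assume "y \<in> S"
    then show "f y \<le> f x" using x(2) assms(1) by (metis Max_ge finite_imageI imageI)
  qed
qed

lemma lookup_partial_shift:
  "lookup (partial_shift n j c p) \<nu>
     = of_int (exp_coeff n j \<nu> - c) * lookup p \<nu> + of_int (snd \<nu> j + 1) * lookup p (raise j \<nu>)"
  unfolding partial_shift_def lookup_minus lookup_of_int_mult lookup_partial by (simp add: algebra_simps)

lemma keys_partial_shift:
  "\<nu> \<in> keys (partial_shift n j c p) \<Longrightarrow> \<nu> \<in> keys p \<or> (raise j \<nu> \<in> keys p \<and> snd \<nu> j + 1 \<noteq> 0)"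
  by (cases "snd \<nu> j + 1 = 0") (auto simp: in_keys_iff lookup_partial_shift)

lemma finite_staircase: "finite (staircase n j p)"
  unfolding staircase_def by (intro finite_UN_I) auto

lemma nonneg_partial_shift:
  assumes "nonneg p"
  shows "nonneg (partial_shift n j c p)"
  unfolding nonneg_def
proof (intro ballI allI)
  fix \<nu> i assume "\<nu> \<in> keys (partial_shift n j c p)"
  from keys_partial_shift[OF this] show "0 \<le> snd \<nu> i"
  proof
    assume "\<nu> \<in> keys p" then show ?thesis using assms by (simp add: nonneg_def)
  next
    assume a: "raise j \<nu> \<in> keys p \<and> snd \<nu> j + 1 \<noteq> 0"
    then have "0 \<le> snd (raise j \<nu>) i" using assms by (simp add: nonneg_def)
    then show ?thesis using a by (auto simp: snd_raise split: if_splits)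
  qed
qed

lemma staircase_partial_shift_subset: "staircase n j' (partial_shift n j c p) \<subseteq> staircase n j' p"
proof
  fix x assume "x \<in> staircase n j' (partial_shift n j c p)"
  then obtain \<nu> where nu: "\<nu> \<in> keys (partial_shift n j c p)" "x \<in> {exp_coeff n j' \<nu>} \<times> {0..snd \<nu> j'}"
    unfolding staircase_def by blast
  from keys_partial_shift[OF nu(1)] show "x \<in> staircase n j' p"
  proof
    assume "\<nu> \<in> keys p" then show ?thesis using nu(2) unfolding staircase_def by blast
  next
    assume a: "raise j \<nu> \<in> keys p \<and> snd \<nu> j + 1 \<noteq> 0"
    have "{exp_coeff n j' \<nu>} \<times> {0..snd \<nu> j'} \<subseteq> {exp_coeff n j' (raise j \<nu>)} \<times> {0..snd (raise j \<nu>) j'}"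
      by (auto simp: snd_raise)
    then show ?thesis using nu(2) a unfolding staircase_def by blast
  qed
qed

lemma staircase_partial_shift_neq:
  assumes "nonneg p" "\<mu>0 \<in> keys p"
  shows "staircase n j (partial_shift n j (exp_coeff n j \<mu>0) p) \<noteq> staircase n j p"
proof -
  define c where "c = exp_coeff n j \<mu>0"
  define S where "S = {\<mu> \<in> keys p. exp_coeff n j \<mu> = c}"
  have "\<mu>0 \<in> S" using assms(2) by (simp add: S_def c_def)
  then have "S \<noteq> {}" by blast
  moreover have "finite S" by (simp add: S_def)
  ultimately obtain \<mu>1 where mu1: "\<mu>1 \<in> S" and top: "\<And>\<mu>. \<mu> \<in> S \<Longrightarrow> snd \<mu> j \<le> snd \<mu>1 j"
    using obtain_max_on_finite[of _ "\<lambda>\<mu>. snd \<mu> j"] by blast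
  define B where "B = snd \<mu>1 j"
  have "0 \<le> B" using mu1 assms(1) by (auto simp: nonneg_def S_def B_def)
  then have in_p: "(c, B) \<in> staircase n j p"
    using mu1 unfolding staircase_def S_def B_def by (intro UN_I[of \<mu>1]) auto
  have "(c, B) \<notin> staircase n j (partial_shift n j c p)"
  proof
    assume "(c, B) \<in> staircase n j (partial_shift n j c p)"
    then obtain \<nu> where nu: "\<nu> \<in> keys (partial_shift n j c p)" "exp_coeff n j \<nu> = c" "B \<le> snd \<nu> j"
      unfolding staircase_def by auto
    from keys_partial_shift[OF nu(1)] show False
    proof
      assume "\<nu> \<in> keys p"
      then have "\<nu> \<in> S" using nu by (simp add: S_def)
      then have "snd \<nu> j = B" using top nu(3) unfolding B_def by (meson order_antisym)
      have "raise j \<nu> \<notin> keys p"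
      proof
        assume "raise j \<nu> \<in> keys p"
        then have "raise j \<nu> \<in> S" using nu by (simp add: S_def)
        then show False using top \<open>snd \<nu> j = B\<close> unfolding B_def by (fastforce simp: snd_raise)
      qed
      then have "lookup (partial_shift n j c p) \<nu> = 0"
        using nu by (simp add: lookup_partial_shift in_keys_iff)
      then show False using nu(1) by (simp add: in_keys_iff)
    next
      assume "raise j \<nu> \<in> keys p \<and> snd \<nu> j + 1 \<noteq> 0"
      then have "raise j \<nu> \<in> S" using nu by (simp add: S_def)
      then show False using top nu(3) unfolding B_def by (fastforce simp: snd_raise)
    qed
  qed
  with in_p show ?thesis by (auto simp: c_def)
qed

lemma partial_shift_nonzero:
  fixes p :: "'F::field_char_0 epoly"
  assumes "\<mu>0 \<in> keys p" "\<mu> \<in> keys p" "exp_coeff n j \<mu> \<noteq> exp_coeff n j \<mu>0 \<or> snd \<mu> j \<noteq> 0"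
    and "nonneg p"
  shows "partial_shift n j (exp_coeff n j \<mu>0) p \<noteq> 0"
proof -
  define c where "c = exp_coeff n j \<mu>0"
  let ?q = "partial_shift n j c p"
  have "?q \<noteq> 0"
  proof (cases "\<exists>\<mu>\<in>keys p. exp_coeff n j \<mu> \<noteq> c")
    case True
    define S where "S = {\<mu> \<in> keys p. exp_coeff n j \<mu> \<noteq> c}"
    have "finite S" "S \<noteq> {}" using True unfolding S_def by auto
    then obtain \<mu>1 where mu1: "\<mu>1 \<in> S" and top: "\<And>\<mu>. \<mu> \<in> S \<Longrightarrow> snd \<mu> j \<le> snd \<mu>1 j"
      using obtain_max_on_finite[of _ "\<lambda>\<mu>. snd \<mu> j"] by blast
    have "raise j \<mu>1 \<notin> keys p"
    proof
      assume "raise j \<mu>1 \<in> keys p"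
      then have "raise j \<mu>1 \<in> S" using mu1 by (simp add: S_def)
      then show False using top[of "raise j \<mu>1"] by (simp add: snd_raise)
    qed
    then have "lookup ?q \<mu>1 = of_int (exp_coeff n j \<mu>1 - c) * lookup p \<mu>1"
      by (simp add: lookup_partial_shift in_keys_iff)
    moreover have "lookup p \<mu>1 \<noteq> 0" "exp_coeff n j \<mu>1 - c \<noteq> 0" using mu1 by (auto simp: S_def in_keys_iff)
    ultimately have "lookup ?q \<mu>1 \<noteq> 0" by simp
    then show ?thesis by (metis lookup_zero)
  next
    case False
    then have "snd \<mu> j \<noteq> 0" using assms(2,3) unfolding c_def by blast
    have "finite (keys p)" "keys p \<noteq> {}" using assms(1) by auto
    then obtain \<mu>1 where mu1: "\<mu>1 \<in> keys p" and top: "\<And>\<mu>. \<mu> \<in> keys p \<Longrightarrow> snd \<mu> j \<le> snd \<mu>1 j"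
      using obtain_max_on_finite[of _ "\<lambda>\<mu>. snd \<mu> j"] by blast
    have "0 \<le> snd \<mu> j" using assms(2,4) by (simp add: nonneg_def)
    with top[OF assms(2)] \<open>snd \<mu> j \<noteq> 0\<close> have pos: "0 < snd \<mu>1 j" by linarith
    have "exp_coeff n j \<mu>1 - c = 0" using False mu1 by auto
    then have "lookup ?q (lower j \<mu>1) = of_int (snd \<mu>1 j) * lookup p \<mu>1"
      by (simp add: lookup_partial_shift snd_lower)
    moreover have "lookup p \<mu>1 \<noteq> 0" using mu1 by (simp add: in_keys_iff)
    ultimately have "lookup ?q (lower j \<mu>1) \<noteq> 0" using pos by simp
    then show ?thesis by (metis lookup_zero)
  qed
  then show ?thesis by (simp add: c_def)
qed

lemma staircase_size_partial_shift_less: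
  fixes p :: "'F::field_char_0 epoly"
  assumes "nonneg p" "\<mu>0 \<in> keys p" "j < N"
  shows "staircase_size n N (partial_shift n j (exp_coeff n j \<mu>0) p) < staircase_size n N p"
  unfolding staircase_size_def
proof (rule sum_strict_mono_ex1)
  show "finite {..<N}" by simp
  show "\<forall>i\<in>{..<N}. card (staircase n i (partial_shift n j (exp_coeff n j \<mu>0) p)) \<le> card (staircase n i p)"
    using staircase_partial_shift_subset finite_staircase by (blast intro: card_mono)
  have "staircase n j (partial_shift n j (exp_coeff n j \<mu>0) p) \<subset> staircase n j p"
    using staircase_partial_shift_subset staircase_partial_shift_neq[OF assms(1,2)] by blast
  then have "card (staircase n j (partial_shift n j (exp_coeff n j \<mu>0) p)) < card (staircase n j p)"
    using finite_staircase by (blast intro: psubset_card_mono)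
  then show "\<exists>i\<in>{..<N}. card (staircase n i (partial_shift n j (exp_coeff n j \<mu>0) p)) < card (staircase n i p)"
    using assms(3) by blast
qed

section \<open>The algebra \<open>A\<^sub>P\<close> is \<open>\<partial>\<close>-simple\<close>

context adm_monos
begin

definition partial_ideal :: "'F::field_char_0 epoly set \<Rightarrow> bool" where
  "partial_ideal J \<longleftrightarrow> J \<subseteq> Alg \<and> (\<forall>g\<in>J. \<forall>h\<in>Alg. h * g \<in> J) \<and> (\<forall>g\<in>J. \<forall>h\<in>J. g + h \<in> J)
     \<and> (\<forall>g\<in>J. \<forall>i<N. partial n i g \<in> J)"

lemma partial_idealI:
  assumes "J \<subseteq> Alg" "\<And>g h. g \<in> J \<Longrightarrow> h \<in> Alg \<Longrightarrow> h * g \<in> J" "\<And>g h. g \<in> J \<Longrightarrow> h \<in> J \<Longrightarrow> g + h \<in> J"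
    "\<And>g i. g \<in> J \<Longrightarrow> i < N \<Longrightarrow> partial n i g \<in> J"
  shows "partial_ideal J"
  using assms unfolding partial_ideal_def by blast

lemma partial_ideal_partial_shift:
  assumes "partial_ideal J" "p \<in> J" "j < N"
  shows "partial_shift n j c p \<in> J"
proof -
  have "single 0 (- of_int c) * p \<in> J" "partial n j p \<in> J"
    using assms Alg_const unfolding partial_ideal_def by blast+
  moreover have "partial_shift n j c p = partial n j p + single 0 (- of_int c) * p"
    by (rule poly_mapping_eqI) (simp add: partial_shift_def lookup_minus lookup_add lookup_const_mult)
  ultimately show ?thesis using assms(1) unfolding partial_ideal_def by metis
qed

lemma Alg_eq_single_exp:
  assumes "p \<in> Alg" "\<mu>0 \<in> keys p"
    and same: "\<And>j \<mu>. j < N \<Longrightarrow> \<mu> \<in> keys p \<Longrightarrow> exp_coeff n j \<mu> = exp_coeff n j \<mu>0 \<and> snd \<mu> j = 0"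
  shows "p = single \<mu>0 (lookup p \<mu>0)" "snd \<mu>0 = 0"
proof -
  have P: "P \<mu>" if "\<mu> \<in> keys p" for \<mu> using assms(1) that by (auto simp: Alg_def)
  have snd0: "snd \<mu> = 0" if "\<mu> \<in> keys p" for \<mu>
  proof
    fix i show "snd \<mu> i = 0 i"
      using same[OF _ that, of i] P_snd[OF P[OF that], of i] by (cases "i < N") auto
  qed
  have eq: "\<mu> = \<mu>0" if "\<mu> \<in> keys p" for \<mu>
  proof (rule prod_eqI)
    show "fst \<mu> = fst \<mu>0"
    proof
      fix i show "fst \<mu> i = fst \<mu>0 i"
      proof (cases "i < n")
        case True
        then have "exp_coeff n i \<mu> = exp_coeff n i \<mu>0" using same[OF _ that, of i] n_le_N by simp
        then show ?thesis using True by (simp add: exp_coeff_def)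
      next
        case False
        then show ?thesis using P_fst P that assms(2) by simp
      qed
    qed
    show "snd \<mu> = snd \<mu>0" using snd0 that assms(2) by simp
  qed
  show "snd \<mu>0 = 0" using snd0 assms(2) .
  show "p = single \<mu>0 (lookup p \<mu>0)"
  proof (rule poly_mapping_eqI)
    fix \<nu> show "lookup p \<nu> = lookup (single \<mu>0 (lookup p \<mu>0)) \<nu>"
      using eq[of \<nu>] by (cases "\<nu> = \<mu>0") (auto simp: lookup_single in_keys_iff when_def)
  qed
qed

lemma partial_ideal_exp_monomial:
  assumes J: "partial_ideal J"
  shows "p \<in> J \<Longrightarrow> p \<noteq> 0 \<Longrightarrow> nonneg p \<Longrightarrow> \<exists>\<mu>0 v. v \<noteq> 0 \<and> snd \<mu>0 = 0 \<and> P \<mu>0 \<and> single \<mu>0 v \<in> J"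
proof (induction "staircase_size n N p" arbitrary: p rule: less_induct)
  case less
  obtain \<mu>0 where mu0: "\<mu>0 \<in> keys p" using less.prems(2) by (metis ex_in_conv keys_eq_empty)
  show ?case
  proof (cases "\<forall>j<N. \<forall>\<mu>\<in>keys p. exp_coeff n j \<mu> = exp_coeff n j \<mu>0 \<and> snd \<mu> j = 0")
    case True
    have "p \<in> Alg" using J less.prems(1) unfolding partial_ideal_def by blast
    then have "p = single \<mu>0 (lookup p \<mu>0)" "snd \<mu>0 = 0"
      using Alg_eq_single_exp[OF _ mu0] True by blast+
    moreover have "P \<mu>0" using \<open>p \<in> Alg\<close> mu0 by (simp add: Alg_def)
    moreover have "lookup p \<mu>0 \<noteq> 0" using mu0 by (simp add: in_keys_iff)
    ultimately show ?thesis using less.prems(1) by metis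
  next
    case False
    then obtain j \<mu> where j: "j < N" "\<mu> \<in> keys p" "exp_coeff n j \<mu> \<noteq> exp_coeff n j \<mu>0 \<or> snd \<mu> j \<noteq> 0"
      by blast
    let ?q = "partial_shift n j (exp_coeff n j \<mu>0) p"
    have "?q \<in> J" using partial_ideal_partial_shift[OF J less.prems(1) j(1)] .
    moreover have "?q \<noteq> 0" by (rule partial_shift_nonzero[OF mu0 j(2,3) less.prems(3)])
    moreover have "nonneg ?q" by (rule nonneg_partial_shift[OF less.prems(3)])
    moreover have "staircase_size n N ?q < staircase_size n N p"
      by (rule staircase_size_partial_shift_less[OF less.prems(3) mu0 j(1)])
    ultimately show ?thesis using less.hyps by blast
  qed
qed

lemma partial_ideal_nonneg:
  assumes J: "partial_ideal J" and "g \<in> J" "g \<noteq> 0"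
  obtains p where "p \<in> J" "p \<noteq> 0" "nonneg p"
proof -
  have Pg: "P \<mu>" if "\<mu> \<in> keys g" for \<mu> using J \<open>g \<in> J\<close> that unfolding partial_ideal_def Alg_def by blast
  define \<beta> where "\<beta> i = (\<Sum>\<mu>\<in>keys g. \<bar>snd \<mu> i\<bar>)" for i
  define m :: mono where "m = (0, \<beta>)"
  have "P m" unfolding m_def
  proof (rule P_poly)
    show "\<forall>i. 0 \<le> \<beta> i" unfolding \<beta>_def by (simp add: sum_nonneg)
    show "\<forall>i\<ge>N. \<beta> i = 0" unfolding \<beta>_def using P_snd Pg by simp
  qed
  define p where "p = single m 1 * g"
  have lookup_p: "lookup p \<nu> = lookup g (\<nu> - m)" for \<nu> unfolding p_def by (simp add: lookup_single_mult)
  show ?thesis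
  proof (rule that)
    show "p \<in> J" unfolding p_def using J \<open>g \<in> J\<close> Alg_single[OF \<open>P m\<close>] unfolding partial_ideal_def by blast
    obtain \<mu> where "\<mu> \<in> keys g" using \<open>g \<noteq> 0\<close> by (metis ex_in_conv keys_eq_empty)
    then have "lookup p (\<mu> + m) \<noteq> 0" by (simp add: lookup_p in_keys_iff)
    then show "p \<noteq> 0" by (metis lookup_zero)
    show "nonneg p" unfolding nonneg_def
    proof (intro ballI allI)
      fix \<nu> i assume "\<nu> \<in> keys p"
      then have "\<nu> - m \<in> keys g" by (simp add: in_keys_iff lookup_p)
      then have "\<bar>snd (\<nu> - m) i\<bar> \<le> \<beta> i" unfolding \<beta>_def by (rule member_le_sum) auto
      moreover have "snd \<nu> i = snd (\<nu> - m) i + \<beta> i" by (simp add: m_def)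
      ultimately show "0 \<le> snd \<nu> i" by linarith
    qed
  qed
qed

lemma partial_ideal_exp_monomial_unit:
  fixes v :: "'F::field_char_0"
  assumes J: "partial_ideal J" and "single \<mu>0 v \<in> J" "v \<noteq> 0" "snd \<mu>0 = 0" "P \<mu>0"
  shows "1 \<in> J"
proof -
  define u :: "'F epoly" where "u = single (- fst \<mu>0, 0) (1 / v)"
  have "P (- fst \<mu>0, 0)" by (rule P_exp) (use P_fst[OF \<open>P \<mu>0\<close>] in simp)
  then have "u \<in> Alg" unfolding u_def by (rule Alg_single)
  then have "u * single \<mu>0 v \<in> J" using J \<open>single \<mu>0 v \<in> J\<close> unfolding partial_ideal_def by blast
  moreover have "(- fst \<mu>0, 0) + \<mu>0 = 0" using \<open>snd \<mu>0 = 0\<close> by (simp add: prod_eq_iff)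
  then have "u * single \<mu>0 v = 1" using \<open>v \<noteq> 0\<close> by (simp add: u_def mult_single)
  ultimately show ?thesis by simp
qed

theorem partial_ideal_contains_one:
  assumes J: "partial_ideal J" and "g \<in> J" "g \<noteq> 0"
  shows "1 \<in> J"
proof -
  obtain p where "p \<in> J" "p \<noteq> 0" "nonneg p" using partial_ideal_nonneg[OF assms] .
  then obtain \<mu>0 v where "v \<noteq> 0" "snd \<mu>0 = 0" "P \<mu>0" "single \<mu>0 v \<in> J"
    using partial_ideal_exp_monomial[OF J] by blast
  then show ?thesis using partial_ideal_exp_monomial_unit[OF J] by blast
qed

end

section \<open>Lie ideals of the vector fields over \<open>A\<^sub>P\<close>\<close>

lemma polarise_square_zero:
  fixes x z :: "'a::comm_ring_1"
  assumes "(x + z) * (x + z) = 0" "x * x = 0" "z * z = 0"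
  shows "of_nat 2 * (x * z) = 0"
  using assms by (simp add: algebra_simps)

context adm_monos
begin

definition vf_ideal :: "(nat \<Rightarrow> 'F::field_char_0 epoly) set \<Rightarrow> bool" where
  "vf_ideal I \<longleftrightarrow> I \<subseteq> Vf \<and> (\<lambda>k. 0) \<in> I \<and> (\<forall>X\<in>I. \<forall>Y\<in>I. (\<lambda>k. X k + Y k) \<in> I)
     \<and> (\<forall>c. \<forall>X\<in>I. vscale (single 0 c) X \<in> I) \<and> (\<forall>X\<in>Vf. \<forall>Y\<in>I. vbr N n X Y \<in> I)"

context
  fixes I :: "(nat \<Rightarrow> 'F::field_char_0 epoly) set"
  assumes I: "vf_ideal I"
begin

lemma ideal_Vf: "X \<in> I \<Longrightarrow> X \<in> Vf"
  using I unfolding vf_ideal_def by blast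

lemma ideal_zero: "(\<lambda>k. 0) \<in> I"
  using I unfolding vf_ideal_def by blast

lemma ideal_add: "X \<in> I \<Longrightarrow> Y \<in> I \<Longrightarrow> (\<lambda>k. X k + Y k) \<in> I"
  using I unfolding vf_ideal_def by blast

lemma ideal_vbr: "U \<in> Vf \<Longrightarrow> X \<in> I \<Longrightarrow> vbr N n U X \<in> I"
  using I unfolding vf_ideal_def by blast

lemma ideal_diff:
  assumes "X \<in> I" "Y \<in> I"
  shows "(\<lambda>k. X k - Y k) \<in> I"
proof -
  have neg: "single 0 (-1) * p = - p" for p :: "'F epoly"
    by (rule poly_mapping_eqI) (simp add: lookup_const_mult)
  have "vscale (single 0 (-1)) Y \<in> I" using I assms(2) unfolding vf_ideal_def by blast
  from ideal_add[OF assms(1) this] show ?thesis by (simp add: neg)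
qed

definition core :: "(nat \<Rightarrow> 'F epoly) set" where
  "core = {Z \<in> Vf. \<forall>a\<in>Alg. vscale a Z \<in> I}"

definition core_coeffs :: "'F epoly set" where
  "core_coeffs = {g \<in> Alg. \<forall>Y\<in>Vf. vscale g Y \<in> I}"

lemma core_subset:
  assumes "Z \<in> core"
  shows "Z \<in> I"
proof -
  have "vscale 1 Z \<in> I" using assms Alg_one unfolding core_def by blast
  then show ?thesis by (simp add: vscale_def)
qed

lemma core_vbr:
  assumes Z: "Z \<in> core" and U: "U \<in> Vf"
  shows "vbr N n U Z \<in> core"
  unfolding core_def
proof (intro CollectI conjI ballI)
  have ZV: "Z \<in> Vf" using Z unfolding core_def by blast
  then show "vbr N n U Z \<in> Vf" using Vf_vbr[OF U] by blast
  fix a :: "'F epoly" assume a: "a \<in> Alg"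
  have "vscale a Z \<in> I" using Z a unfolding core_def by blast
  then have A: "vbr N n U (vscale a Z) \<in> I" by (rule ideal_vbr[OF U])
  have B: "vscale (vapply N n U a) Z \<in> I"
    using Z Alg_vapply[OF U a] unfolding core_def by blast
  have "vscale a (vbr N n U Z) = (\<lambda>k. vbr N n U (vscale a Z) k - vscale (vapply N n U a) Z k)"
    by (simp add: vbr_vscale_right[OF Vf_high_zero[OF ZV]] fun_eq_iff)
  then show "vscale a (vbr N n U Z) \<in> I" using ideal_diff[OF A B] by simp
qed

lemma partial_ideal_core_coeffs: "partial_ideal core_coeffs"
proof (rule partial_idealI)
  show "core_coeffs \<subseteq> Alg" unfolding core_coeffs_def by blast
next
  fix g h :: "'F epoly" assume g: "g \<in> core_coeffs" and h: "h \<in> Alg"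
  show "h * g \<in> core_coeffs" unfolding core_coeffs_def
  proof (intro CollectI conjI ballI)
    show "h * g \<in> Alg" using g h unfolding core_coeffs_def by (simp add: Alg_mult)
    fix Y :: "nat \<Rightarrow> 'F epoly" assume "Y \<in> Vf"
    then have "vscale g (vscale h Y) \<in> I" using g Vf_vscale[OF h] unfolding core_coeffs_def by blast
    then show "vscale (h * g) Y \<in> I" by (simp add: vscale_def algebra_simps)
  qed
next
  fix g h :: "'F epoly" assume g: "g \<in> core_coeffs" and h: "h \<in> core_coeffs"
  show "g + h \<in> core_coeffs" unfolding core_coeffs_def
  proof (intro CollectI conjI ballI)
    show "g + h \<in> Alg" using g h unfolding core_coeffs_def by (simp add: Alg_add)
    fix Y :: "nat \<Rightarrow> 'F epoly" assume "Y \<in> Vf"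
    then have "vscale g Y \<in> I" "vscale h Y \<in> I" using g h unfolding core_coeffs_def by blast+
    then show "vscale (g + h) Y \<in> I" using ideal_add by (simp add: vscale_def distrib_right)
  qed
next
  fix g :: "'F epoly" and l assume g: "g \<in> core_coeffs" and l: "l < N"
  show "partial n l g \<in> core_coeffs" unfolding core_coeffs_def
  proof (intro CollectI conjI ballI)
    show "partial n l g \<in> Alg" using g unfolding core_coeffs_def by (simp add: Alg_partial)
    fix Y :: "nat \<Rightarrow> 'F epoly" assume Y: "Y \<in> Vf"
    have "vscale g Y \<in> I" using g Y unfolding core_coeffs_def by blast
    then have A: "vbr N n (partial_field l) (vscale g Y) \<in> I" by (rule ideal_vbr[OF Vf_partial_field[OF l]])
    have B: "vscale g (vbr N n (partial_field l) Y) \<in> I"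
      using g Vf_vbr[OF Vf_partial_field[OF l] Y] unfolding core_coeffs_def by blast
    have "vscale (partial n l g) Y
        = (\<lambda>k. vbr N n (partial_field l) (vscale g Y) k - vscale g (vbr N n (partial_field l) Y) k)"
      by (simp add: vbr_vscale_right[OF Vf_high_zero[OF Y]] vapply_partial_field[OF l] fun_eq_iff)
    then show "vscale (partial n l g) Y \<in> I" using ideal_diff[OF A B] by simp
  qed
qed

lemma core_coeffs_of_core:
  assumes Z: "Z \<in> core" and k: "k < N"
  shows "Z k \<in> core_coeffs"
  unfolding core_coeffs_def
proof (intro CollectI conjI ballI)
  have ZV: "Z \<in> Vf" using Z unfolding core_def by blast
  then show "Z k \<in> Alg" using Vf_coeff k by blast
  fix Y :: "nat \<Rightarrow> 'F epoly" assume Y: "Y \<in> Vf"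
  have A: "vscale (coord k) (vbr N n Y Z) \<in> I"
    using core_vbr[OF Z Y] Alg_coord[OF k] unfolding core_def by blast
  have B: "vbr N n (vscale (coord k) Y) Z \<in> I"
    using ideal_vbr[OF Vf_vscale[OF Alg_coord[OF k] Y] core_subset[OF Z]] .
  have "vscale (Z k) Y = (\<lambda>j. vscale (coord k) (vbr N n Y Z) j - vbr N n (vscale (coord k) Y) Z j)"
    by (simp add: vbr_vscale_left[OF Vf_high_zero[OF Y]] vapply_coord[OF k] fun_eq_iff)
  then show "vscale (Z k) Y \<in> I" using ideal_diff[OF A B] by simp
qed

text \<open>Elements of \<open>core\<close> are produced from the bracket alone via
  \<open>a (Y(c) X + X(c) Y) = [a Y, c X] - [a c Y, X]\<close>, where \<open>c X = -[b X, X] \<in> I\<close>.\<close>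

lemma core_symmetrised:
  assumes X: "X \<in> I" and b: "b \<in> Alg" and Y: "Y \<in> Vf"
  defines "c \<equiv> vapply N n X b"
  shows "(\<lambda>k. vapply N n Y c * X k + vapply N n X c * Y k) \<in> core"
  unfolding core_def
proof (intro CollectI conjI ballI)
  have XV: "X \<in> Vf" using ideal_Vf[OF X] .
  have c: "c \<in> Alg" unfolding c_def using Alg_vapply[OF XV b] .
  have Yc: "vapply N n Y c \<in> Alg" and Xc: "vapply N n X c \<in> Alg"
    using Alg_vapply[OF Y c] Alg_vapply[OF XV c] by blast+
  show "(\<lambda>k. vapply N n Y c * X k + vapply N n X c * Y k) \<in> Vf"
    by (rule VfI) (simp_all add: Vf_high_zero[OF XV] Vf_high_zero[OF Y] Alg_add Alg_mult Yc Xc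
        Vf_coeff[OF XV] Vf_coeff[OF Y])
  have cX: "vscale c X \<in> I"
  proof -
    have "vbr N n (vscale b X) X = (\<lambda>k. - (c * X k))"
      by (simp add: vbr_vscale_left[OF Vf_high_zero[OF XV]] vbr_self c_def)
    then have "vscale c X = (\<lambda>k. vbr N n X X k - vbr N n (vscale b X) X k)"
      by (simp add: fun_eq_iff vbr_self)
    then show ?thesis using ideal_diff[OF ideal_vbr[OF XV X] ideal_vbr[OF Vf_vscale[OF b XV] X]] by simp
  qed
  fix a :: "'F epoly" assume a: "a \<in> Alg"
  have A: "vbr N n (vscale a Y) (vscale c X) \<in> I" using ideal_vbr[OF Vf_vscale[OF a Y] cX] .
  have B: "vbr N n (vscale (a * c) Y) X \<in> I" using ideal_vbr[OF Vf_vscale[OF Alg_mult[OF a c] Y] X] .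
  have eq1: "vbr N n (vscale a Y) (vscale c X)
      = (\<lambda>k. a * (c * vbr N n Y X k + vapply N n Y c * X k) - c * vapply N n X a * Y k)"
    by (simp add: vbr_vscale_left[OF Vf_high_zero[OF Y], where Z = "vscale c X"]
        vbr_vscale_right[OF Vf_high_zero[OF XV], where Y = Y] vapply_vscale)
  have eq2: "vbr N n (vscale (a * c) Y) X
      = (\<lambda>k. a * c * vbr N n Y X k - (vapply N n X a * c + a * vapply N n X c) * Y k)"
    by (simp add: vbr_vscale_left[OF Vf_high_zero[OF Y], where Z = X] vapply_mult)
  have ring: "a * (yc * x + xc * y) = (a * (c * v + yc * x) - c * xa * y) - (a * c * v - (xa * c + a * xc) * y)"
    for yc x xc y v xa :: "'F epoly"
    by (simp add: algebra_simps)
  have "vscale a (\<lambda>k. vapply N n Y c * X k + vapply N n X c * Y k)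
      = (\<lambda>k. vbr N n (vscale a Y) (vscale c X) k - vbr N n (vscale (a * c) Y) X k)"
    unfolding eq1 eq2 vscale_apply by (rule ext) (rule ring)
  then show "vscale a (\<lambda>k. vapply N n Y c * X k + vapply N n X c * Y k) \<in> I"
    using ideal_diff[OF A B] by simp
qed

lemma core_trivial_coeff_partial_zero:
  assumes core0: "core = {\<lambda>k. 0}" and Z: "Z \<in> I" and b: "b \<in> Alg" and i: "i < N" and k: "k < N"
  shows "Z k * partial n i (vapply N n Z b) = 0"
proof -
  define c where "c = vapply N n Z b"
  have comp: "partial n i' c * Z k' + vapply N n Z c * partial_field i' k' = 0" if "i' < N" "k' < N" for i' k'
  proof -
    have "(\<lambda>k. vapply N n (partial_field i') c * Z k + vapply N n Z c * partial_field i' k) \<in> core"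
      unfolding c_def by (rule core_symmetrised[OF Z b Vf_partial_field[OF \<open>i' < N\<close>]])
    then have "(\<lambda>k. vapply N n (partial_field i') c * Z k + vapply N n Z c * partial_field i' k) = (\<lambda>k. 0)"
      using core0 by blast
    from fun_cong[OF this, of k'] have "vapply N n (partial_field i') c * Z k' + vapply N n Z c * partial_field i' k' = 0"
      by simp
    then show ?thesis by (simp add: vapply_partial_field[OF \<open>i' < N\<close>])
  qed
  have diag: "Z i' * partial n i' c = - vapply N n Z c" if "i' < N" for i'
    using comp[OF that that] by (simp add: partial_field_def mult.commute eq_neg_iff_add_eq_0)
  define A where "A = vapply N n Z c"
  have "A = (\<Sum>i'<N. Z i' * partial n i' c)" by (simp add: A_def vapply_def)
  also have "\<dots> = (\<Sum>i'<N. - A)" by (rule sum.cong) (auto simp: diag A_def)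
  finally have "A = - (of_nat N * A)" by simp
  then have "A + of_nat N * A = 0" by (simp add: eq_neg_iff_add_eq_0)
  then have "(of_nat (Suc N) :: 'F epoly) * A = 0" by (simp add: algebra_simps)
  then have "A = 0" by (rule of_nat_mult_eq_zero) simp
  then show ?thesis using comp[OF i k] by (simp add: mult.commute c_def A_def)
qed

lemma core_trivial_coeff_square_zero:
  assumes core0: "core = {\<lambda>k. 0}" and Z: "Z \<in> I" and j: "j < N"
  shows "Z j * Z j = 0"
proof -
  have x: "coord j \<in> Alg" using Alg_coord[OF j] .
  have "Z j * partial n j (vapply N n Z (coord j)) = 0"
    using core_trivial_coeff_partial_zero[OF core0 Z x j j] .
  then have first: "Z j * partial n j (Z j) = 0" by (simp add: vapply_coord[OF j])
  have "Z j * partial n j (vapply N n Z (coord j * coord j)) = 0"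
    using core_trivial_coeff_partial_zero[OF core0 Z Alg_mult[OF x x] j j] .
  moreover have "vapply N n Z (coord j * coord j) = Z j * coord j + coord j * Z j"
    by (simp only: vapply_mult vapply_coord[OF j])
  moreover have "partial n j (Z j * coord j + coord j * Z j)
      = partial n j (Z j) * coord j + Z j + Z j + coord j * partial n j (Z j)"
    by (simp only: partial_add partial_mult partial_coord simp_thms(6) if_True mult_1_left mult_1_right add.assoc)
  moreover have "Z j * (partial n j (Z j) * coord j + Z j + Z j + coord j * partial n j (Z j))
      = of_nat 2 * (Z j * Z j) + of_nat 2 * coord j * (Z j * partial n j (Z j))"
    by (simp add: algebra_simps)
  ultimately have "(of_nat 2 :: 'F epoly) * (Z j * Z j) = 0" using first by simp
  then show ?thesis by (rule of_nat_mult_eq_zero) simp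
qed

definition coeff_annihilator :: "nat \<Rightarrow> 'F epoly set" where
  "coeff_annihilator j = {g \<in> Alg. \<forall>Z\<in>I. g * Z j = 0}"

lemma partial_ideal_coeff_annihilator:
  assumes j: "j < N"
  shows "partial_ideal (coeff_annihilator j)"
proof (rule partial_idealI)
  show "coeff_annihilator j \<subseteq> Alg" unfolding coeff_annihilator_def by blast
next
  fix g h :: "'F epoly" assume "g \<in> coeff_annihilator j" "h \<in> Alg"
  then show "h * g \<in> coeff_annihilator j"
    unfolding coeff_annihilator_def by (auto simp: Alg_mult mult.assoc)
next
  fix g h :: "'F epoly" assume "g \<in> coeff_annihilator j" "h \<in> coeff_annihilator j"
  then show "g + h \<in> coeff_annihilator j"
    unfolding coeff_annihilator_def by (auto simp: Alg_add distrib_right)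
next
  fix g :: "'F epoly" and l assume g: "g \<in> coeff_annihilator j" and l: "l < N"
  show "partial n l g \<in> coeff_annihilator j" unfolding coeff_annihilator_def
  proof (intro CollectI conjI ballI)
    show "partial n l g \<in> Alg" using g unfolding coeff_annihilator_def by (simp add: Alg_partial)
    fix Z assume Z: "Z \<in> I"
    have "g * Z j = 0" using g Z unfolding coeff_annihilator_def by blast
    then have "partial n l g * Z j + g * partial n l (Z j) = 0" by (metis partial_mult partial_zero)
    moreover have "g * vbr N n (partial_field l) Z j = 0"
      using g ideal_vbr[OF Vf_partial_field[OF l] Z] unfolding coeff_annihilator_def by blast
    ultimately show "partial n l g * Z j = 0" by (simp add: vbr_partial_field_left[OF l j])
  qed
qed

lemma core_nontrivial:
  assumes X: "X \<in> I" "X \<noteq> (\<lambda>k. 0)"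
  shows "core \<noteq> {\<lambda>k. 0}"
proof
  assume core0: "core = {\<lambda>k. 0}"
  have XV: "X \<in> Vf" using ideal_Vf[OF X(1)] .
  obtain j where Xj: "X j \<noteq> 0" using X(2) by auto
  then have j: "j < N" using Vf_high_zero[OF XV] by (meson not_less)
  have "X j \<in> coeff_annihilator j" unfolding coeff_annihilator_def
  proof (intro CollectI conjI ballI)
    show "X j \<in> Alg" using Vf_coeff[OF XV j] .
    fix Z assume Z: "Z \<in> I"
    have "(X j + Z j) * (X j + Z j) = 0"
      using core_trivial_coeff_square_zero[OF core0 ideal_add[OF X(1) Z] j] by simp
    then have "(of_nat 2 :: 'F epoly) * (X j * Z j) = 0"
      by (rule polarise_square_zero[OF _ core_trivial_coeff_square_zero[OF core0 X(1) j]
            core_trivial_coeff_square_zero[OF core0 Z j]])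
    then show "X j * Z j = 0" by (rule of_nat_mult_eq_zero) simp
  qed
  then have "1 \<in> coeff_annihilator j"
    using partial_ideal_contains_one[OF partial_ideal_coeff_annihilator[OF j]] Xj by blast
  then show False using X(1) Xj unfolding coeff_annihilator_def by auto
qed

theorem vf_ideal_cases: "I = {\<lambda>k. 0} \<or> I = Vf"
proof (cases "\<exists>X\<in>I. X \<noteq> (\<lambda>k. 0)")
  case False
  then show ?thesis using ideal_zero by blast
next
  case True
  then obtain X where "X \<in> I" "X \<noteq> (\<lambda>k. 0)" by blast
  then have "core \<noteq> {\<lambda>k. 0}" by (rule core_nontrivial)
  moreover have "(\<lambda>k. 0) \<in> core"
    using ideal_zero unfolding core_def by (simp add: Vf_zero vscale_def)
  ultimately obtain Z where Z: "Z \<in> core" "Z \<noteq> (\<lambda>k. 0)" by blast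
  then obtain k where Zk: "Z k \<noteq> 0" by auto
  have ZV: "Z \<in> Vf" using Z(1) unfolding core_def by blast
  then have k: "k < N" using Vf_high_zero Zk by (meson not_less)
  have "1 \<in> core_coeffs"
    using partial_ideal_contains_one[OF partial_ideal_core_coeffs core_coeffs_of_core[OF Z(1) k] Zk] .
  then have "Y \<in> I" if "Y \<in> Vf" for Y
    using that unfolding core_coeffs_def by (auto simp: vscale_def)
  then show ?thesis using ideal_Vf by blast
qed

end

end

context adm_monos
begin

lemma lie_algebra_vf_space: "lie_algebra (vf_space n (N - n) P :: 'F::field_char_0 vf set) (vf_bracket n (N - n))"
  unfolding lie_algebra_def
proof (intro conjI ballI allI)
  let ?L = "vf_space n (N - n) P :: 'F vf set"
  let ?B = "vf_bracket n (N - n) :: 'F vf \<Rightarrow> 'F vf \<Rightarrow> 'F vf"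
  have fin: "fin_fields D" and V: "to_epolys D \<in> Vf" if "D \<in> ?L" for D :: "'F vf"
    using that vf_space_iff by blast+
  note eqI = to_epolys_inject
  note simps = fin_fields_vf_add fin_fields_vf_smul fin_fields_vf_bracket fin_fields_vf_zero
    to_epolys_vf_add to_epolys_vf_smul to_epolys_bracket to_epolys_vf_zero
  show "vf_zero \<in> ?L" by (simp add: vf_space_iff simps Vf_zero)
  fix x y z assume x: "x \<in> ?L" and y: "y \<in> ?L" and z: "z \<in> ?L"
  note f = fin[OF x] fin[OF y] fin[OF z]
  show "vf_add x y \<in> ?L" using x y by (simp add: vf_space_iff simps Vf_add)
  show "?B x y \<in> ?L" using x y by (simp add: vf_space_iff simps Vf_vbr)
  show "?B (vf_add x y) z = vf_add (?B x z) (?B y z)"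
    by (rule eqI) (simp_all add: f simps vbr_add_left)
  show "?B z (vf_add x y) = vf_add (?B z x) (?B z y)"
    by (rule eqI) (simp_all add: f simps vbr_add_right)
  show "?B x x = vf_zero"
    by (rule eqI) (simp_all add: f simps vbr_self)
  have "(\<lambda>k. vbr N n (to_epolys x) (vbr N n (to_epolys y) (to_epolys z)) k
      + (vbr N n (to_epolys y) (vbr N n (to_epolys z) (to_epolys x)) k
      + vbr N n (to_epolys z) (vbr N n (to_epolys x) (to_epolys y)) k)) = (\<lambda>k. 0)"
    by (simp add: fun_eq_iff add.assoc[symmetric] vbr_jacobi)
  then show "vf_add (?B x (?B y z)) (vf_add (?B y (?B z x)) (?B z (?B x y))) = vf_zero"
    by (intro eqI) (simp_all add: f simps)
  fix c :: 'F
  show "vf_smul c x \<in> ?L" using x by (simp add: vf_space_iff simps Vf_vscale Alg_const)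
  show "?B (vf_smul c x) y = vf_smul c (?B x y)"
    by (rule eqI) (simp_all add: f simps vbr_vscale_left[OF Vf_high_zero[OF V[OF x]]] vscale_eta)
  show "?B x (vf_smul c y) = vf_smul c (?B x y)"
    by (rule eqI) (simp_all add: f simps vbr_vscale_right[OF Vf_high_zero[OF V[OF y]]] vscale_eta)
qed

text \<open>\<open>[\<partial>\<^sub>0, x\<^sub>0 \<partial>\<^sub>0] = \<partial>\<^sub>0\<close>.\<close>

lemma vf_space_nonabelian:
  assumes "0 < N"
  shows "\<exists>x\<in>vf_space n (N - n) P. \<exists>y\<in>vf_space n (N - n) P. vf_bracket n (N - n) x y \<noteq> (vf_zero :: 'F::field_char_0 vf)"
proof -
  define d :: "nat \<Rightarrow> 'F epoly" where "d = partial_field 0"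
  have d: "d \<in> Vf" unfolding d_def by (rule Vf_partial_field[OF assms])
  have xd: "vscale (coord 0) d \<in> Vf" by (rule Vf_vscale[OF Alg_coord[OF assms] d])
  have "vbr N n d (vscale (coord 0) d) = (\<lambda>k. coord 0 * vbr N n d d k + vapply N n d (coord 0) * d k)"
    by (rule vbr_vscale_right[OF Vf_high_zero[OF d]])
  also have "\<dots> = d"
    by (simp add: vbr_self d_def vapply_partial_field[OF assms] partial_coord)
  finally have br: "to_epolys (vf_bracket n (N - n) (of_epolys d) (of_epolys (vscale (coord 0) d))) = d"
    by (simp add: to_epolys_bracket fin_fields_of_epolys)
  have "d 0 \<noteq> 0" by (simp add: d_def partial_field_def)
  then have "vf_bracket n (N - n) (of_epolys d) (of_epolys (vscale (coord 0) d)) \<noteq> vf_zero"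
    using br by (auto simp: to_epolys_vf_zero)
  moreover have "of_epolys d \<in> vf_space n (N - n) P" "of_epolys (vscale (coord 0) d) \<in> vf_space n (N - n) P"
    using d xd by (simp_all add: vf_space_iff fin_fields_of_epolys)
  ultimately show ?thesis by blast
qed

lemma vf_ideal_to_epolys:
  assumes "lie_ideal (vf_space n (N - n) P) (vf_bracket n (N - n)) I"
  shows "vf_ideal (to_epolys ` (I :: 'F::field_char_0 vf set))"
proof -
  have IL: "I \<subseteq> vf_space n (N - n) P" and I0: "vf_zero \<in> I" and Iadd: "\<And>x y. x \<in> I \<Longrightarrow> y \<in> I \<Longrightarrow> vf_add x y \<in> I"
    and Ismul: "\<And>c x. x \<in> I \<Longrightarrow> vf_smul c x \<in> I"
    and Ibr: "\<And>x y. x \<in> vf_space n (N - n) P \<Longrightarrow> y \<in> I \<Longrightarrow> vf_bracket n (N - n) x y \<in> I"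
    using assms unfolding lie_ideal_def by blast+
  have fin: "fin_fields x" and V: "to_epolys x \<in> Vf" if "x \<in> I" for x
    using IL that vf_space_iff by blast+
  show ?thesis unfolding vf_ideal_def
  proof (intro conjI ballI allI)
    show "to_epolys ` I \<subseteq> Vf" using V by blast
    have "to_epolys vf_zero \<in> to_epolys ` I" using I0 by (rule imageI)
    then show "(\<lambda>k. 0) \<in> to_epolys ` I" by (simp add: to_epolys_vf_zero)
  next
    fix X Y assume "X \<in> to_epolys ` I" "Y \<in> to_epolys ` I"
    then obtain x y where xy: "x \<in> I" "y \<in> I" "X = to_epolys x" "Y = to_epolys y" by blast
    then have "(\<lambda>k. X k + Y k) = to_epolys (vf_add x y)" by (simp add: to_epolys_vf_add fin)
    then show "(\<lambda>k. X k + Y k) \<in> to_epolys ` I" using Iadd[OF xy(1,2)] by simp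
  next
    fix c :: 'F and X assume "X \<in> to_epolys ` I"
    then obtain x where x: "x \<in> I" "X = to_epolys x" by blast
    then have "vscale (single 0 c) X = to_epolys (vf_smul c x)" by (simp add: to_epolys_vf_smul fin)
    then show "vscale (single 0 c) X \<in> to_epolys ` I" using Ismul[OF x(1)] by simp
  next
    fix U Y :: "nat \<Rightarrow> 'F epoly" assume U: "U \<in> Vf" and "Y \<in> to_epolys ` I"
    then obtain y where y: "y \<in> I" "Y = to_epolys y" by blast
    have u: "of_epolys U \<in> vf_space n (N - n) P" using U by (simp add: vf_space_iff fin_fields_of_epolys)
    have "vbr N n U Y = to_epolys (vf_bracket n (N - n) (of_epolys U) y)"
      using y by (simp add: to_epolys_bracket fin_fields_of_epolys fin)
    then show "vbr N n U Y \<in> to_epolys ` I" using Ibr[OF u y(1)] by simp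
  qed
qed

lemma vf_space_ideal_cases:
  assumes I: "lie_ideal (vf_space n (N - n) P) (vf_bracket n (N - n)) I"
  shows "I = {vf_zero :: 'F::field_char_0 vf} \<or> I = vf_space n (N - n) P"
proof -
  have IL: "I \<subseteq> vf_space n (N - n) P" and I0: "vf_zero \<in> I" using I unfolding lie_ideal_def by blast+
  have fin: "fin_fields x" if "x \<in> vf_space n (N - n) P" for x :: "'F vf" using that vf_space_iff by blast
  from vf_ideal_cases[OF vf_ideal_to_epolys[OF I]] show ?thesis
  proof
    assume img: "to_epolys ` I = {\<lambda>k. 0}"
    have "x = vf_zero" if x: "x \<in> I" for x
    proof (rule to_epolys_inject)
      show "fin_fields x" using fin IL x by blast
      show "fin_fields vf_zero" by (rule fin_fields_vf_zero)
      have "to_epolys x \<in> to_epolys ` I" using x by (rule imageI)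
      then show "to_epolys x = to_epolys vf_zero" using img by (simp add: to_epolys_vf_zero)
    qed
    then show ?thesis using I0 by blast
  next
    assume img: "to_epolys ` I = Vf"
    have "x \<in> I" if x: "x \<in> vf_space n (N - n) P" for x
    proof -
      have "to_epolys x \<in> to_epolys ` I" using img x by (simp add: vf_space_iff)
      then obtain y where y: "y \<in> I" "to_epolys y = to_epolys x" by auto
      have "fin_fields y" using fin IL y(1) by blast
      then have "y = x" by (rule to_epolys_inject[OF _ fin[OF x] y(2)])
      then show ?thesis using y(1) by simp
    qed
    then show ?thesis using IL by blast
  qed
qed

theorem simple_vf_space:
  assumes "0 < N"
  shows "simple_lie_algebra (vf_space n (N - n) P :: 'F::field_char_0 vf set) (vf_bracket n (N - n))"
  unfolding simple_lie_algebra_def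
  using lie_algebra_vf_space vf_space_nonabelian[OF assms] vf_space_ideal_cases by blast

end

section \<open>The algebras \<open>W(n,m)\<close>, \<open>W(n,m,r,s)\<close> and \<open>W\<^sup>*(n,m)\<close>\<close>

definition Wrs_monos :: "nat \<Rightarrow> nat \<Rightarrow> nat \<Rightarrow> nat \<Rightarrow> mono \<Rightarrow> bool" where
  "Wrs_monos n m r s \<mu> \<longleftrightarrow> valid_mono n m \<mu> \<and>
      (\<forall>i. r \<le> i \<and> i < n \<longrightarrow> snd \<mu> i \<ge> 0) \<and>
      (\<forall>i. n + s \<le> i \<and> i < n + m \<longrightarrow> snd \<mu> i \<ge> 0)"

lemma adm_monos_Wrs_monos: "adm_monos n (n + m) (Wrs_monos n m r s)"
proof
  show "n \<le> n + m" by simp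
next
  fix \<mu> :: mono and i assume "Wrs_monos n m r s \<mu>" "n \<le> i"
  then show "fst \<mu> i = 0" by (simp add: Wrs_monos_def valid_mono_def)
next
  fix \<mu> :: mono and i assume "Wrs_monos n m r s \<mu>" "n + m \<le> i"
  then show "snd \<mu> i = 0" by (simp add: Wrs_monos_def valid_mono_def)
next
  show "Wrs_monos n m r s 0" by (simp add: Wrs_monos_def valid_mono_def)
next
  fix \<mu> \<nu> :: mono assume "Wrs_monos n m r s \<mu>" "Wrs_monos n m r s \<nu>"
  then show "Wrs_monos n m r s (\<mu> + \<nu>)" by (simp add: Wrs_monos_def valid_mono_def)
next
  fix \<mu> :: mono and i assume P: "Wrs_monos n m r s \<mu>" and ne: "snd \<mu> i \<noteq> 0"
  have v: "valid_mono n m \<mu>" using P by (simp add: Wrs_monos_def)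
  then have "i < n + m" using ne by (auto simp: valid_mono_def not_less[symmetric])
  show "Wrs_monos n m r s (lower i \<mu>)"
    unfolding Wrs_monos_def
  proof (intro conjI allI impI)
    show "valid_mono n m (lower i \<mu>)" using v \<open>i < n + m\<close> by (simp add: valid_mono_def lower_def)
  next
    fix j assume "r \<le> j \<and> j < n"
    then show "0 \<le> snd (lower i \<mu>) j" using P ne by (auto simp: Wrs_monos_def snd_lower)
  next
    fix j assume "n + s \<le> j \<and> j < n + m"
    then show "0 \<le> snd (lower i \<mu>) j" using P ne by (auto simp: Wrs_monos_def snd_lower)
  qed
next
  fix \<alpha> :: "nat \<Rightarrow> int" assume "\<forall>i\<ge>n. \<alpha> i = 0"
  then show "Wrs_monos n m r s (\<alpha>, 0)" by (simp add: Wrs_monos_def valid_mono_def)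
next
  fix \<beta> :: "nat \<Rightarrow> int" assume "\<forall>i. 0 \<le> \<beta> i" "\<forall>i\<ge>n + m. \<beta> i = 0"
  then show "Wrs_monos n m r s (0, \<beta>)" by (simp add: Wrs_monos_def valid_mono_def)
qed

lemma simple_vf_space_Wrs_monos:
  assumes "1 \<le> n + m"
  shows "simple_lie_algebra (vf_space n m (Wrs_monos n m r s) :: 'F::field_char_0 vf set) (vf_bracket n m)"
proof -
  interpret adm_monos n "n + m" "Wrs_monos n m r s" by (rule adm_monos_Wrs_monos)
  have "0 < n + m" using assms by linarith
  then show ?thesis using simple_vf_space[where 'F='F] by simp
qed

lemma W_eq_vf_space: "W n m = vf_space n m (Wrs_monos n m n m)"
proof -
  have "Wrs_monos n m n m = valid_mono n m" by (simp add: Wrs_monos_def fun_eq_iff)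
  then show ?thesis by (simp add: W_def)
qed

lemma Wrs_eq_vf_space: "Wrs n m r s = vf_space n m (Wrs_monos n m r s)"
  by (simp add: Wrs_def Wrs_monos_def[abs_def])

lemma Wstar_eq_vf_space: "Wstar n m = vf_space n m (Wrs_monos n m 0 0)"
proof -
  have pointwise: "Wrs_monos n m 0 0 \<mu> \<longleftrightarrow> valid_mono n m \<mu> \<and> (\<forall>i. snd \<mu> i \<ge> 0)" for \<mu>
  proof
    assume a: "Wrs_monos n m 0 0 \<mu>"
    have "snd \<mu> i \<ge> 0" for i
    proof (cases "i < n + m")
      case True then show ?thesis using a by (cases "i < n") (auto simp: Wrs_monos_def)
    next
      case False then show ?thesis using a by (simp add: Wrs_monos_def valid_mono_def)
    qed
    then show "valid_mono n m \<mu> \<and> (\<forall>i. snd \<mu> i \<ge> 0)" using a by (simp add: Wrs_monos_def)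
  qed (simp add: Wrs_monos_def)
  have "Wrs_monos n m 0 0 = (\<lambda>\<mu>. valid_mono n m \<mu> \<and> (\<forall>i. snd \<mu> i \<ge> 0))"
    by (rule ext) (rule pointwise)
  then show ?thesis by (simp add: Wstar_def)
qed

theorem theorem1:
  fixes n m r s :: nat
  assumes "1 \<le> n + m" and "r \<le> n" and "s \<le> m"
  shows "simple_lie_algebra (W n m :: 'F::field_char_0 vf set) (vf_bracket n m)
       \<and> simple_lie_algebra (Wrs n m r s :: 'F vf set) (vf_bracket n m)
       \<and> simple_lie_algebra (Wstar n m :: 'F vf set) (vf_bracket n m)"
  unfolding W_eq_vf_space Wrs_eq_vf_space Wstar_eq_vf_space
  using simple_vf_space_Wrs_monos[OF assms(1)] by blast

end
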